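(* Assume the standing setting and Assumptions (A1)–(A2) described in the context, and fix $\xi\in L^2_{\mathcal{F}_{N-1}}(\Omega;\mathbb{R}^n)$. Then for every $u\in\mathcal{U}$ the map $u\mapsto\mathcal{J}(N,\xi;u)$ is Fréchet differentiable at $u$, and its derivative $\mathcal{J}'(N,\xi;u)$ satisfies $[[\mathcal{J}'(N,\xi;u),v]]=[[\mathcal{A}u+\mathcal{B}\xi+\mathbf{a},v]]$ for all $v\in\mathcal{U}$, where $\mathcal{A}=\mathcal{L}_0^*G_0\mathcal{L}_0+\mathcal{L}_1^*\Phi^*Q\Phi\mathcal{L}_1+\mathcal{L}_1^*\Phi^*S^\top+S\Phi\mathcal{L}_1+R$, $\mathcal{B}=\mathcal{L}_0^*G_0\mathcal{I}_0+\mathcal{L}_1^*\Phi^*Q\Phi\mathcal{I}_1+S\Phi\mathcal{I}_1$, and $\mathbf{a}=\mathcal{L}_0^*G_0\mathcal{Q}_0+\mathcal{L}_1^*\Phi^*Q\Phi\mathcal{Q}_1+\mathcal{L}_1^*\Phi^*\eta+S\Phi\mathcal{Q}_1+\rho$.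
   Context: Fix integers $N\ge 1$, $n,m\ge1$, and let $\mathcal{T}=\{0,1,\dots,N-1\}$. Let $(\Omega,\mathcal{F},\mathbb{P})$ be a complete probability space carrying a scalar random sequence $\{\omega_k\}_{k\in\mathcal{T}}$; let $\mathcal{F}_k=\sigma\{\omega_0,\dots,\omega_k\}$ ($\mathbb{P}$-completed), $\mathcal{F}_{-1}$ trivial, and assume $\mathbb{E}[\omega_k\mid\mathcal{F}_{k-1}]=0$, $\mathbb{E}[\omega_k^2\mid\mathcal{F}_{k-1}]=1$ for $k\in\mathcal{T}$. $\mathbb{E}_{k-1}[\cdot]=\mathbb{E}[\cdot\mid\mathcal{F}_{k-1}]$. $L^2_{\mathcal{F}_{j}}(\Omega;\mathbb{R}^n)$ = square-integrable $\mathcal{F}_j$-measurable $\mathbb{R}^n$-valued random variables; $L^2_{\mathbb{F}}(\mathcal{T};\mathbb{R}^d)$ = processes $(h_k)_{k\in\mathcal{T}}$ with $h_k$ $\mathcal{F}_{k-1}$-measurable and $\mathbb{E}\sum_k|h_k|^2<\infty$. $\mathcal{U}=L^2_{\mathbb{F}}(\mathcal{T};\mathbb{R}^m)$. Assumption (A1): $A_k,C_k\in\mathbb{R}^{n\times n}$, $B_k\in\mathbb{R}^{n\times m}$ deterministic, $q\in L^2_{\mathbb{F}}(\mathcal{T};\mathbb{R}^n)$. Assumption (A2): $G_0\in\mathbb{S}^n$, $Q_k\in\mathbb{S}^n$, $R_k\in\mathbb{S}^m$, $S_k\in\mathbb{R}^{m\times n}$ deterministic; $\eta\in L^2_{\mathbb{F}}(\mathcal{T};\mathbb{R}^n)$,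 $\rho\in L^2_{\mathbb{F}}(\mathcal{T};\mathbb{R}^m)$. State equation: $y_k=A_k\mathbb{E}_{k-1}[y_{k+1}]+B_ku_k+C_k\mathbb{E}_{k-1}[y_{k+1}\omega_k]+q_k$ ($k\in\mathcal{T}$), $y_N=\xi$; under (A1) it has a unique adapted square-integrable solution $y^{(\xi,u)}$ depending boundedly and affinely on $(\xi,u,q)$. Cost: $\mathcal{J}(N,\xi;u)=\frac12\mathbb{E}\{\langle G_0y_0,y_0\rangle+\sum_{k=0}^{N-1}[\langle Q_k\bar y_k,\bar y_k\rangle+2\langle S_k\bar y_k,u_k\rangle+\langle R_ku_k,u_k\rangle+2\langle\eta_k,\bar y_k\rangle+2\langle\rho_k,u_k\rangle]\}$ with $\bar y_k=\mathbb{E}_{k-1}[y_{k+1}]$, $y=y^{(\xi,u)}$. Operators: let $\mathscr{X}_{-1}=L^2_{\mathcal{F}_{-1}}(\Omega;\mathbb{R}^n)$, $\mathscr{X}_{N-1}=L^2_{\mathcal{F}_{N-1}}(\Omega;\mathbb{R}^n)$ (inner product $\mathbb{E}\langle X,Y\rangle$), $\mathscr{Z}=L^2_{\mathbb{F}}(\mathcal{T};\mathbb{R}^n)$, $\mathscr{Y}$ = processes $(\phi_k)_{k\in\mathcal{T}}$ with $\phi_k$ $\mathcal{F}_k$-measurable and $\mathbb{E}\sum|\phi_k|^2<\infty$; on $\mathscr{Y},\mathscr{Z},\mathcal{U}$ use $[[\phi,\psi]]=\mathbb{E}\sum_{k=0}^{N-1}\langle\phi_k,\psi_k\rangle$. Let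 $y^\xi$ solve the state equation with terminal $\xi$, zero control, $q=0$; $y^u$ with terminal $0$, control $u$, $q=0$; $y^0$ with terminal $0$, zero control and the given $q$. Define $\mathcal{I}_0\xi=y^\xi_0$, $(\mathcal{I}_1\xi)_k=y^\xi_{k+1}$; $\mathcal{L}_0u=y^u_0$, $(\mathcal{L}_1u)_k=y^u_{k+1}$; $\mathcal{Q}_0=y^0_0\in\mathscr{X}_{-1}$, $(\mathcal{Q}_1)_k=y^0_{k+1}$ (so $\mathcal{Q}_1\in\mathscr{Y}$); $\Phi:\mathscr{Y}\to\mathscr{Z}$, $(\Phi\phi)_k=\mathbb{E}_{k-1}[\phi_k]$; pointwise multiplication operators $(Q\phi)_k=Q_k\phi_k$ on $\mathscr{Z}$, $(S\phi)_k=S_k\phi_k$ from $\mathscr{Z}$ to $\mathcal{U}$, $(S^\top u)_k=S_k^\top u_k$ from $\mathcal{U}$ to $\mathscr{Z}$, $(Ru)_k=R_ku_k$ on $\mathcal{U}$; $G_0$ acts on $\mathscr{X}_{-1}$ by multiplication. All are bounded linear; ${}^*$ denotes Hilbert-space adjoint. $\eta,\rho$ are regarded as elements of $\mathscr{Z}$ and $\mathcal{U}$. *)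

theory Defs
  imports "HOL-Probability.Probability"
begin

text \<open>Index shift: filt M w j is the P-completed sigma-algebra generated by w 0, ..., w (j-1);
  hence filt M w (Suc k) = F_k and filt M w k = F_(k-1), filt M w 0 = F_(-1).\<close>

definition filt :: "'a measure \<Rightarrow> (nat \<Rightarrow> 'a \<Rightarrow> real) \<Rightarrow> nat \<Rightarrow> 'a measure" where
  "filt M w j = sigma (space M)
     ({w i -` B \<inter> space M | i B. i < j \<and> B \<in> sets borel} \<union> null_sets M)"

definition cexp :: "'a measure \<Rightarrow> 'a measure \<Rightarrow> ('a \<Rightarrow> real^'d) \<Rightarrow> 'a \<Rightarrow> real^'d" where
  "cexp M F X = (\<lambda>x. \<chi> i. real_cond_exp M F (\<lambda>y. X y $ i) x)"

definition sqint :: "'a measure \<Rightarrow> 'a measure \<Rightarrow> ('a \<Rightarrow> real^'d) \<Rightarrow> bool" where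
  "sqint M F X \<longleftrightarrow> X \<in> borel_measurable F \<and> integrable M (\<lambda>x. (norm (X x))\<^sup>2)"

text \<open>L^2_F(T;R^d): predictable processes (h_k is F_(k-1)-measurable), k < N.\<close>
definition predL2 :: "'a measure \<Rightarrow> (nat \<Rightarrow> 'a \<Rightarrow> real) \<Rightarrow> nat \<Rightarrow> (nat \<Rightarrow> 'a \<Rightarrow> real^'d) \<Rightarrow> bool" where
  "predL2 M w N h \<longleftrightarrow> (\<forall>k<N. sqint M (filt M w k) (h k))"

text \<open>The space Y: adapted processes (phi_k is F_k-measurable), k < N.\<close>
definition adaptL2 :: "'a measure \<Rightarrow> (nat \<Rightarrow> 'a \<Rightarrow> real) \<Rightarrow> nat \<Rightarrow> (nat \<Rightarrow> 'a \<Rightarrow> real^'d) \<Rightarrow> bool" where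
  "adaptL2 M w N h \<longleftrightarrow> (\<forall>k<N. sqint M (filt M w (Suc k)) (h k))"

definition ipp :: "'a measure \<Rightarrow> nat \<Rightarrow> (nat \<Rightarrow> 'a \<Rightarrow> real^'d) \<Rightarrow> (nat \<Rightarrow> 'a \<Rightarrow> real^'d) \<Rightarrow> real" where
  "ipp M N f g = (\<integral>x. (\<Sum>k<N. inner (f k x) (g k x)) \<partial>M)"

definition ipx :: "'a measure \<Rightarrow> ('a \<Rightarrow> real^'d) \<Rightarrow> ('a \<Rightarrow> real^'d) \<Rightarrow> real" where
  "ipx M X Y = (\<integral>x. inner (X x) (Y x) \<partial>M)"

text \<open>Hilbert-space adjoint: T maps the domain D (inner product ipD) into a space with
  inner product ipC; adj gives, for x in the codomain, an element z of D with
  ipD z v = ipC x (T v) for all v in D (unique up to null elements).\<close>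
definition hadj :: "'b set \<Rightarrow> ('b \<Rightarrow> 'b \<Rightarrow> real) \<Rightarrow> ('c \<Rightarrow> 'c \<Rightarrow> real) \<Rightarrow> ('b \<Rightarrow> 'c) \<Rightarrow> 'c \<Rightarrow> 'b" where
  "hadj D ipD ipC T x = (SOME z. z \<in> D \<and> (\<forall>v\<in>D. ipD z v = ipC x (T v)))"

definition is_sol :: "'a measure \<Rightarrow> (nat \<Rightarrow> 'a \<Rightarrow> real) \<Rightarrow> nat
   \<Rightarrow> (nat \<Rightarrow> real^'n^'n) \<Rightarrow> (nat \<Rightarrow> real^'m^'n) \<Rightarrow> (nat \<Rightarrow> real^'n^'n)
   \<Rightarrow> (nat \<Rightarrow> 'a \<Rightarrow> real^'n) \<Rightarrow> ('a \<Rightarrow> real^'n) \<Rightarrow> (nat \<Rightarrow> 'a \<Rightarrow> real^'m)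
   \<Rightarrow> (nat \<Rightarrow> 'a \<Rightarrow> real^'n) \<Rightarrow> bool" where
  "is_sol M w N A B C q xi u y \<longleftrightarrow>
     (\<forall>k<N. sqint M (filt M w (Suc k)) (y k)) \<and> sqint M (filt M w N) (y N) \<and>
     (AE x in M. y N x = xi x) \<and>
     (\<forall>k<N. AE x in M. y k x =
        A k *v cexp M (filt M w k) (y (Suc k)) x + B k *v u k x
        + C k *v cexp M (filt M w k) (\<lambda>z. w k z *\<^sub>R y (Suc k) z) x + q k x)"

definition sol :: "'a measure \<Rightarrow> (nat \<Rightarrow> 'a \<Rightarrow> real) \<Rightarrow> nat
   \<Rightarrow> (nat \<Rightarrow> real^'n^'n) \<Rightarrow> (nat \<Rightarrow> real^'m^'n) \<Rightarrow> (nat \<Rightarrow> real^'n^'n)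
   \<Rightarrow> (nat \<Rightarrow> 'a \<Rightarrow> real^'n) \<Rightarrow> ('a \<Rightarrow> real^'n) \<Rightarrow> (nat \<Rightarrow> 'a \<Rightarrow> real^'m)
   \<Rightarrow> nat \<Rightarrow> 'a \<Rightarrow> real^'n" where
  "sol M w N A B C q xi u = (SOME y. is_sol M w N A B C q xi u y)"

definition cost :: "'a measure \<Rightarrow> (nat \<Rightarrow> 'a \<Rightarrow> real) \<Rightarrow> nat
   \<Rightarrow> (nat \<Rightarrow> real^'n^'n) \<Rightarrow> (nat \<Rightarrow> real^'m^'n) \<Rightarrow> (nat \<Rightarrow> real^'n^'n)
   \<Rightarrow> (nat \<Rightarrow> 'a \<Rightarrow> real^'n)
   \<Rightarrow> real^'n^'n \<Rightarrow> (nat \<Rightarrow> real^'n^'n) \<Rightarrow> (nat \<Rightarrow> real^'n^'m) \<Rightarrow> (nat \<Rightarrow> real^'m^'m)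
   \<Rightarrow> (nat \<Rightarrow> 'a \<Rightarrow> real^'n) \<Rightarrow> (nat \<Rightarrow> 'a \<Rightarrow> real^'m)
   \<Rightarrow> ('a \<Rightarrow> real^'n) \<Rightarrow> (nat \<Rightarrow> 'a \<Rightarrow> real^'m) \<Rightarrow> real" where
  "cost M w N A B C q G0 Q S R eta rho xi u =
     (let y = sol M w N A B C q xi u;
          yb = (\<lambda>k. cexp M (filt M w k) (y (Suc k)))
      in (1/2) * (\<integral>x. inner (G0 *v y 0 x) (y 0 x)
           + (\<Sum>k<N. inner (Q k *v yb k x) (yb k x) + 2 * inner (S k *v yb k x) (u k x)
                 + inner (R k *v u k x) (u k x) + 2 * inner (eta k x) (yb k x)
                 + 2 * inner (rho k x) (u k x)) \<partial>M))"

definition frechet_at :: "(nat \<Rightarrow> 'a \<Rightarrow> real^'m) set \<Rightarrow> ((nat \<Rightarrow> 'a \<Rightarrow> real^'m) \<Rightarrow> real)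
   \<Rightarrow> ((nat \<Rightarrow> 'a \<Rightarrow> real^'m) \<Rightarrow> real) \<Rightarrow> (nat \<Rightarrow> 'a \<Rightarrow> real^'m)
   \<Rightarrow> ((nat \<Rightarrow> 'a \<Rightarrow> real^'m) \<Rightarrow> real) \<Rightarrow> bool" where
  "frechet_at D nrm J u Df \<longleftrightarrow>
     (\<forall>v\<in>D. \<forall>v'\<in>D. \<forall>a b. Df (\<lambda>k x. a *\<^sub>R v k x + b *\<^sub>R v' k x) = a * Df v + b * Df v') \<and>
     (\<exists>K. \<forall>v\<in>D. \<bar>Df v\<bar> \<le> K * nrm v) \<and>
     (\<forall>e>0. \<exists>d>0. \<forall>v\<in>D. nrm v < d \<longrightarrow>
        \<bar>J (\<lambda>k x. u k x + v k x) - J u - Df v\<bar> \<le> e * nrm v)"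

end

(* The cost is quadratic in the control. By superposition for the linear backward state equation,
   J(u + v) - J(u) is the expectation of a first variation, linear in v, plus half the expectation
   of a second variation, quadratic in v and in its state response L v. The latter is O(||v||^2) by
   the a priori estimate for the state equation, which rests on the L^2-contractivity of
   E[. | F_(k-1)] and of E[w_k . | F_(k-1)] (the second because E[w_k^2 | F_(k-1)] = 1).
   The first variation is identified with [[Au + B xi + a, v]] by realising the adjoints explicitly:
   Phi* is the identity on predictable processes, and L0*, L1* are read off from the forward adjoint
   equation x_(k+1) = A_k^T x_k + w_k C_k^T x_k + phi_k through the duality
   E<x_0, y_0> + sum_k E<phi_k, y_(k+1)> = sum_k E<B_k^T x_k, v_k>,
   obtained by telescoping E<x_k, y_k>. *)

theory Submission
  imports Defs
begin

declare transpose_matrix_vector[simp del]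

abbreviation L2 :: "'a measure \<Rightarrow> ('a \<Rightarrow> real^'d) \<Rightarrow> bool" where
  "L2 M X \<equiv> sqint M M X"

lemma borel_measurable_vec_componentwise:
  fixes f :: "'a \<Rightarrow> real^'n"
  assumes "\<And>i. (\<lambda>x. f x $ i) \<in> borel_measurable M"
  shows "f \<in> borel_measurable M"
  unfolding borel_measurable_euclidean_space[where 'c="real^'n"]
  using assms by (auto simp: Basis_vec_def inner_axis)

lemma borel_measurable_vec_nth:
  fixes X :: "'a \<Rightarrow> real^'n"
  shows "X \<in> borel_measurable G \<Longrightarrow> (\<lambda>y. X y $ i) \<in> borel_measurable G"
  using measurable_compose[OF _ borel_measurable_nth] .

lemma power2_norm_vec: "(norm (x::real^'n))\<^sup>2 = (\<Sum>i\<in>UNIV. (x$i)\<^sup>2)"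
  unfolding power2_norm_eq_inner inner_vec_def by (simp add: power2_eq_square)

lemma inner_vec_sum: "inner (x::real^'n) y = (\<Sum>i\<in>UNIV. x$i * y$i)"
  by (simp add: inner_vec_def)

lemma mult_le_weighted_squares:
  assumes t: "0 < t"
  shows "(x::real) * y \<le> t / 2 * x\<^sup>2 + y\<^sup>2 / (2 * t)"
proof -
  have "0 \<le> (t * x - y)\<^sup>2" by simp
  then have "2 * t * (x * y) \<le> t\<^sup>2 * x\<^sup>2 + y\<^sup>2" by (simp add: power2_eq_square algebra_simps)
  then show ?thesis using t by (simp add: field_simps power2_eq_square)
qed

lemma abs_inner_le_weighted_squares:
  "0 < t \<Longrightarrow> \<bar>inner a b\<bar> \<le> t / 2 * (norm a)\<^sup>2 + (norm (b::'b::real_inner))\<^sup>2 / (2 * t)"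
  using Cauchy_Schwarz_ineq2[of a b] mult_le_weighted_squares[of t "norm a" "norm b"] by linarith

lemma abs_inner_le_half_squares:
  "\<bar>inner a b\<bar> \<le> (norm a)\<^sup>2 / 2 + (norm (b::'b::real_inner))\<^sup>2 / 2"
  using abs_inner_le_weighted_squares[of 1 a b] by simp

lemma power2_norm_add_le:
  "(norm (x + y))\<^sup>2 \<le> 2 * (norm x)\<^sup>2 + 2 * (norm (y::'b::real_normed_vector))\<^sup>2"
proof -
  have "(norm (x + y))\<^sup>2 \<le> (norm x + norm y)\<^sup>2"
    using norm_triangle_ineq[of x y] by (simp add: power_mono)
  also have "\<dots> \<le> 2 * (norm x)\<^sup>2 + 2 * (norm y)\<^sup>2"
    using mult_le_weighted_squares[of 1 "norm x" "norm y"] by (simp add: power2_sum)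
  finally show ?thesis .
qed

lemma power2_norm_add3_le:
  "(norm (a + b + c))\<^sup>2 \<le> 4 * (norm a)\<^sup>2 + 4 * (norm b)\<^sup>2 + 4 * (norm (c::'b::real_normed_vector))\<^sup>2"
  using power2_norm_add_le[of "a + b" c] power2_norm_add_le[of a b] zero_le_power2[of "norm c"]
  by linarith

lemma le_sqrt_bound_of_weighted:
  fixes a G V :: real
  assumes G: "0 \<le> G" and V: "0 \<le> V" and h: "\<And>t. 0 < t \<Longrightarrow> a \<le> t / 2 * G + V / (2 * t)"
  shows "a \<le> (G + 1) / 2 * sqrt V"
proof (cases "V = 0")
  case True
  have "a \<le> 0"
  proof (rule ccontr)
    assume "\<not> a \<le> 0"
    then have a: "0 < a" by simp
    show False
    proof (cases "G = 0")
      case True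
      then show False using h[of 1] a \<open>V = 0\<close> by simp
    next
      case False
      then have "a \<le> a / 2" using h[of "a / G"] a G \<open>V = 0\<close> by simp
      then show False using a by simp
    qed
  qed
  then show ?thesis using True by simp
next
  case False
  then have sV: "0 < sqrt V" using V by simp
  have "V / (2 * sqrt V) = (V / sqrt V) / 2" by simp
  also have "\<dots> = sqrt V / 2" using real_div_sqrt[OF V] by simp
  finally have "V / (2 * sqrt V) = sqrt V / 2" .
  then show ?thesis using h[OF sV] by (simp add: field_simps)
qed

lemma matrix_vector_mult_power2_bound:
  "\<exists>c\<ge>0. \<forall>x. (norm ((A::real^'n^'m) *v x))\<^sup>2 \<le> c * (norm x)\<^sup>2"
proof -
  obtain c where c: "c \<ge> 0" "\<And>x. norm (A *v x) \<le> c * norm x"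
    using onorm[OF matrix_vector_mul_bounded_linear] onorm_pos_le[OF matrix_vector_mul_bounded_linear]
    by blast
  have "(norm (A *v x))\<^sup>2 \<le> c\<^sup>2 * (norm x)\<^sup>2" for x
    using power_mono[OF c(2)[of x]] by (simp add: power_mult_distrib)
  then show ?thesis by (intro exI[of _ "c\<^sup>2"]) auto
qed

lemma inner_matrix_vector_transpose: "inner ((A::real^'n^'m) *v x) y = inner x (transpose A *v y)"
  by (metis dot_lmul_matrix inner_commute transpose_matrix_vector)

lemma inner_transpose_matrix_vector: "inner x ((A::real^'n^'m) *v y) = inner (transpose A *v x) y"
  by (metis inner_commute inner_matrix_vector_transpose)

lemma inner_symmetric_matrix_vector:
  "transpose A = A \<Longrightarrow> inner ((A::real^'n^'n) *v a) b = inner (A *v b) a"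
  by (metis inner_commute inner_matrix_vector_transpose)

lemma abs_inner_matrix_vector_le:
  assumes "\<forall>x. (norm (A *v x))\<^sup>2 \<le> c * (norm x)\<^sup>2"
  shows "\<bar>inner ((A::real^'n^'m) *v a) b\<bar> \<le> c / 2 * (norm a)\<^sup>2 + (norm b)\<^sup>2 / 2"
  using abs_inner_le_half_squares[of "A *v a" b] assms[rule_format, of a] by linarith

lemma matrix_family_power2_bound:
  fixes N :: nat
  shows "\<exists>c\<ge>0. \<forall>k<N. \<forall>x. (norm ((A k::real^'n^'m) *v x))\<^sup>2 \<le> c * (norm x)\<^sup>2"
proof -
  have "\<forall>k. \<exists>c\<ge>0. \<forall>x. (norm (A k *v x))\<^sup>2 \<le> c * (norm x)\<^sup>2"
    using matrix_vector_mult_power2_bound by blast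
  then obtain f where f: "\<And>k. f k \<ge> 0" "\<And>k x. (norm (A k *v x))\<^sup>2 \<le> f k * (norm x)\<^sup>2"
    by metis
  have "f k * (norm x)\<^sup>2 \<le> (\<Sum>j<N. f j) * (norm x)\<^sup>2" if "k < N" for k x
    using that f(1) by (intro mult_right_mono member_le_sum) simp_all
  then show ?thesis
    using f by (intro exI[of _ "\<Sum>j<N. f j"]) (auto intro: sum_nonneg order_trans[OF f(2)])
qed

lemma abs_inner_matrix_vector_le_uniform:
  assumes c: "\<forall>x. (norm (A *v x))\<^sup>2 \<le> c * (norm x)\<^sup>2" and cK: "c \<le> K" and K: "0 \<le> K"
  shows "\<bar>inner ((A::real^'n^'m) *v a) b\<bar> \<le> (K + 1) / 2 * ((norm a)\<^sup>2 + (norm b)\<^sup>2)"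
proof -
  have "c / 2 * (norm a)\<^sup>2 \<le> (K + 1) / 2 * (norm a)\<^sup>2" using cK by (intro mult_right_mono) auto
  moreover have "(norm b)\<^sup>2 / 2 \<le> (K + 1) / 2 * (norm b)\<^sup>2" using K by (simp add: field_simps)
  ultimately show ?thesis
    using abs_inner_matrix_vector_le[OF c, of a b] by (simp add: distrib_left)
qed

lemma borel_measurable_matrix_vector[measurable]:
  "f \<in> borel_measurable M \<Longrightarrow> (\<lambda>x. (A::real^'n^'m) *v f x) \<in> borel_measurable M"
  using measurable_compose[OF _ borel_measurable_continuous_onI[OF
      linear_continuous_on[OF matrix_vector_mul_bounded_linear]]] by blast

lemma sqint_measurable: "sqint M F X \<Longrightarrow> X \<in> borel_measurable F"
  by (simp add: sqint_def)

lemma sqint_integrable: "sqint M F X \<Longrightarrow> integrable M (\<lambda>x. (norm (X x))\<^sup>2)"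
  by (simp add: sqint_def)

lemma sqint_zero: "sqint M F (\<lambda>x. 0::real^'d)"
  unfolding sqint_def by simp

lemma sqint_subalgebra: "sqint M F X \<Longrightarrow> subalgebra G F \<Longrightarrow> sqint M G X"
  unfolding sqint_def using measurable_from_subalg by blast

lemma sqint_scaleR: "sqint M F X \<Longrightarrow> sqint M F (\<lambda>x. c *\<^sub>R (X x :: real^'d))"
  unfolding sqint_def by (auto simp: power_mult_distrib intro!: borel_measurable_scaleR)

lemma sqint_add:
  fixes X Y :: "'a \<Rightarrow> real^'d"
  assumes X: "sqint M F X" and Y: "sqint M F Y"
    and XM: "X \<in> borel_measurable M" and YM: "Y \<in> borel_measurable M"
  shows "sqint M F (\<lambda>x. X x + Y x)"
  unfolding sqint_def
proof
  show "(\<lambda>x. X x + Y x) \<in> borel_measurable F"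
    using X Y by (auto simp: sqint_def intro!: borel_measurable_add)
  have "integrable M (\<lambda>x. 2 * (norm (X x))\<^sup>2 + 2 * (norm (Y x))\<^sup>2)"
    using X Y by (simp add: sqint_def)
  then show "integrable M (\<lambda>x. (norm (X x + Y x))\<^sup>2)"
    by (rule Bochner_Integration.integrable_bound) (use XM YM power2_norm_add_le in auto)
qed

lemma sqint_matrix_vector:
  fixes X :: "'a \<Rightarrow> real^'d"
  assumes X: "sqint M F X" and XM: "X \<in> borel_measurable M"
  shows "sqint M F (\<lambda>x. (A::real^'d^'e) *v X x)"
  unfolding sqint_def
proof
  show "(\<lambda>x. A *v X x) \<in> borel_measurable F"
    using X by (simp add: sqint_def borel_measurable_matrix_vector)
  obtain c where c: "c \<ge> 0" "\<forall>x. (norm (A *v x))\<^sup>2 \<le> c * (norm x)\<^sup>2"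
    using matrix_vector_mult_power2_bound by blast
  have "integrable M (\<lambda>x. c * (norm (X x))\<^sup>2)" using X by (simp add: sqint_def)
  then show "integrable M (\<lambda>x. (norm (A *v X x))\<^sup>2)"
    by (rule Bochner_Integration.integrable_bound) (use XM c in auto)
qed

lemma L2_add: "L2 M X \<Longrightarrow> L2 M Y \<Longrightarrow> L2 M (\<lambda>x. X x + (Y x :: real^'d))"
  by (rule sqint_add) (auto simp: sqint_def)

lemma L2_matrix_vector: "L2 M X \<Longrightarrow> L2 M (\<lambda>x. (A::real^'n^'m) *v X x)"
  by (rule sqint_matrix_vector) (auto simp: sqint_def)

lemma L2_integrable_inner:
  fixes X Y :: "'a \<Rightarrow> real^'d"
  assumes X: "L2 M X" and Y: "L2 M Y"
  shows "integrable M (\<lambda>x. inner (X x) (Y x))"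
proof -
  have "integrable M (\<lambda>x. (norm (X x))\<^sup>2 / 2 + (norm (Y x))\<^sup>2 / 2)"
    using X Y by (simp add: sqint_def)
  then show ?thesis
    by (rule Bochner_Integration.integrable_bound)
      (use X Y abs_inner_le_half_squares in \<open>auto simp: sqint_def\<close>)
qed

lemma integrable_mult_of_square_integrable:
  fixes f g :: "'a \<Rightarrow> real"
  assumes "integrable M (\<lambda>x. (f x)\<^sup>2)" "integrable M (\<lambda>x. (g x)\<^sup>2)"
    "f \<in> borel_measurable M" "g \<in> borel_measurable M"
  shows "integrable M (\<lambda>x. f x * g x)"
proof -
  have "integrable M (\<lambda>x. (f x)\<^sup>2 / 2 + (g x)\<^sup>2 / 2)" using assms by simp
  then show ?thesis
    by (rule Bochner_Integration.integrable_bound)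
      (use assms abs_inner_le_half_squares[of "f x" "g x" for x] in auto)
qed

lemma integral_inner_add_left:
  fixes P Q R :: "'a \<Rightarrow> real^'n"
  assumes "L2 M P" "L2 M Q" "L2 M R"
  shows "(\<integral>x. inner (P x + Q x) (R x) \<partial>M) = (\<integral>x. inner (P x) (R x) \<partial>M) + (\<integral>x. inner (Q x) (R x) \<partial>M)"
  using L2_integrable_inner[OF assms(1,3)] L2_integrable_inner[OF assms(2,3)]
  by (simp add: inner_add_left)

lemma integral_inner_add_right:
  fixes P Q R :: "'a \<Rightarrow> real^'n"
  assumes "L2 M P" "L2 M Q" "L2 M R"
  shows "(\<integral>x. inner (R x) (P x + Q x) \<partial>M) = (\<integral>x. inner (R x) (P x) \<partial>M) + (\<integral>x. inner (R x) (Q x) \<partial>M)"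
  using L2_integrable_inner[OF assms(3,1)] L2_integrable_inner[OF assms(3,2)]
  by (simp add: inner_add_right)

lemma integral_power2_norm_add3_le:
  fixes a b c :: "'a \<Rightarrow> real^'d"
  assumes a: "L2 M a" and b: "L2 M b" and c: "L2 M c"
  shows "(\<integral>x. (norm (a x + b x + c x))\<^sup>2 \<partial>M)
    \<le> 4 * (\<integral>x. (norm (a x))\<^sup>2 \<partial>M) + 4 * (\<integral>x. (norm (b x))\<^sup>2 \<partial>M) + 4 * (\<integral>x. (norm (c x))\<^sup>2 \<partial>M)"
proof -
  have i: "integrable M (\<lambda>x. 4 * (norm (a x))\<^sup>2 + 4 * (norm (b x))\<^sup>2 + 4 * (norm (c x))\<^sup>2)"
    using a b c by (simp add: sqint_def)
  have "(\<integral>x. (norm (a x + b x + c x))\<^sup>2 \<partial>M)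
      \<le> (\<integral>x. 4 * (norm (a x))\<^sup>2 + 4 * (norm (b x))\<^sup>2 + 4 * (norm (c x))\<^sup>2 \<partial>M)"
  proof (rule integral_mono[OF _ i])
    show "integrable M (\<lambda>x. (norm (a x + b x + c x))\<^sup>2)"
      by (rule Bochner_Integration.integrable_bound[OF i])
        (use a b c power2_norm_add3_le in \<open>auto simp: sqint_def\<close>)
  qed (rule power2_norm_add3_le)
  then show ?thesis using a b c by (simp add: sqint_def)
qed

lemma integral_power2_norm_AE_cong:
  assumes "AE x in M. X x = Y x" "L2 M X" "L2 M Y"
  shows "(\<integral>x. (norm (X x))\<^sup>2 \<partial>M) = (\<integral>x. (norm (Y x))\<^sup>2 \<partial>M)"
  by (rule integral_cong_AE) (use assms in \<open>auto simp: sqint_def\<close>)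

lemma integral_power2_norm_le:
  assumes X: "L2 M X" and Ym: "Y \<in> borel_measurable M"
    and c: "\<And>x. (norm (Y x))\<^sup>2 \<le> c * (norm (X x))\<^sup>2"
  shows "integrable M (\<lambda>x. (norm (Y x))\<^sup>2)"
    "(\<integral>x. (norm (Y x))\<^sup>2 \<partial>M) \<le> c * (\<integral>x. (norm (X x))\<^sup>2 \<partial>M)"
proof -
  have Xi: "integrable M (\<lambda>x. c * (norm (X x))\<^sup>2)" using X by (simp add: sqint_def)
  show Yi: "integrable M (\<lambda>x. (norm (Y x))\<^sup>2)"
    by (rule Bochner_Integration.integrable_bound[OF Xi])
      (use Ym c in \<open>auto intro: order_trans[OF _ abs_ge_self]\<close>)
  show "(\<integral>x. (norm (Y x))\<^sup>2 \<partial>M) \<le> c * (\<integral>x. (norm (X x))\<^sup>2 \<partial>M)"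
    using integral_mono[OF Yi Xi c] by simp
qed

lemma integral_inner_matrix_vector_AE_add3:
  assumes ae: "AE x in M. Y x = Y1 x + Y2 x + Y3 x"
    and L: "L2 M Y" "L2 M Y1" "L2 M Y2" "L2 M Y3" "L2 M Z"
  shows "(\<integral>x. inner ((D::real^'n^'m) *v Y x) (Z x) \<partial>M) = (\<integral>x. inner (D *v Y1 x) (Z x) \<partial>M)
     + (\<integral>x. inner (D *v Y2 x) (Z x) \<partial>M) + (\<integral>x. inner (D *v Y3 x) (Z x) \<partial>M)"
proof -
  have i: "integrable M (\<lambda>x. inner (D *v Y1 x) (Z x))" "integrable M (\<lambda>x. inner (D *v Y2 x) (Z x))"
     "integrable M (\<lambda>x. inner (D *v Y3 x) (Z x))" "integrable M (\<lambda>x. inner (D *v Y x) (Z x))"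
    using L by (auto intro!: L2_integrable_inner L2_matrix_vector)
  have "(\<integral>x. inner (D *v Y x) (Z x) \<partial>M)
      = (\<integral>x. inner (D *v Y1 x) (Z x) + inner (D *v Y2 x) (Z x) + inner (D *v Y3 x) (Z x) \<partial>M)"
    by (rule integral_cong_AE)
      (use i ae in \<open>auto simp: matrix_vector_right_distrib inner_add_left elim!: AE_mp\<close>)
  also have "\<dots> = (\<integral>x. inner (D *v Y1 x) (Z x) \<partial>M) + (\<integral>x. inner (D *v Y2 x) (Z x) \<partial>M)
      + (\<integral>x. inner (D *v Y3 x) (Z x) \<partial>M)"
    using i by simp
  finally show ?thesis .
qed

context prob_space
begin

lemma L2_vec_nth:
  assumes X: "L2 M X"
  shows "integrable M (\<lambda>x. (X x $ i)\<^sup>2)" "integrable M (\<lambda>x. X x $ i)"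
proof -
  have m: "(\<lambda>x. X x $ i) \<in> borel_measurable M"
    using X by (simp add: sqint_def borel_measurable_vec_nth)
  have le: "(X x $ i)\<^sup>2 \<le> (norm (X x))\<^sup>2" for x
    using component_le_norm_cart[of "X x" i] by (simp add: abs_le_square_iff[symmetric])
  show "integrable M (\<lambda>x. (X x $ i)\<^sup>2)"
    by (rule Bochner_Integration.integrable_bound[OF sqint_integrable[OF X]]) (use m le in auto)
  then show "integrable M (\<lambda>x. X x $ i)"
    using square_integrable_imp_integrable[OF m] by simp
qed

lemma sqint_of_componentwise_contraction:
  fixes Z X :: "'a \<Rightarrow> real^'n"
  assumes Zm: "Z \<in> borel_measurable G" and X: "L2 M X"
    and comp: "\<And>i. integrable M (\<lambda>x. (Z x $ i)\<^sup>2) \<and> (\<integral>x. (Z x $ i)\<^sup>2 \<partial>M) \<le> (\<integral>x. (X x $ i)\<^sup>2 \<partial>M)"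
  shows "sqint M G Z" "(\<integral>x. (norm (Z x))\<^sup>2 \<partial>M) \<le> (\<integral>x. (norm (X x))\<^sup>2 \<partial>M)"
proof -
  show "sqint M G Z"
    unfolding sqint_def power2_norm_vec using Zm comp by auto
  have "(\<integral>x. (norm (Z x))\<^sup>2 \<partial>M) = (\<Sum>i\<in>UNIV. \<integral>x. (Z x $ i)\<^sup>2 \<partial>M)"
    unfolding power2_norm_vec using comp by (simp add: Bochner_Integration.integral_sum)
  also have "\<dots> \<le> (\<Sum>i\<in>UNIV. \<integral>x. (X x $ i)\<^sup>2 \<partial>M)"
    using comp by (intro sum_mono) auto
  also have "\<dots> = (\<integral>x. (norm (X x))\<^sup>2 \<partial>M)"
    using L2_vec_nth[OF X] by (simp add: power2_norm_vec Bochner_Integration.integral_sum)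
  finally show "(\<integral>x. (norm (Z x))\<^sup>2 \<partial>M) \<le> (\<integral>x. (norm (X x))\<^sup>2 \<partial>M)" .
qed

end

lemma integrable_bounded_monotone_limit:
  fixes g :: "nat \<Rightarrow> 'a \<Rightarrow> real"
  assumes gi: "\<And>n. integrable M (g n)" and g0: "\<And>n x. 0 \<le> g n x"
    and gm: "\<And>x. mono (\<lambda>n. g n x)" and gl: "\<And>x. (\<lambda>n. g n x) \<longlonglongrightarrow> h x"
    and hm: "h \<in> borel_measurable M" and gK: "\<And>n. integral\<^sup>L M (g n) \<le> K"
  shows "integrable M h \<and> integral\<^sup>L M h \<le> K"
proof -
  have inc: "incseq (\<lambda>n. integral\<^sup>L M (g n))"
    unfolding incseq_def using gm gi by (auto intro!: integral_mono simp: mono_def)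
  have bdd: "bdd_above (range (\<lambda>n. integral\<^sup>L M (g n)))" by (intro bdd_aboveI2[where M=K]) (rule gK)
  have lim: "(\<lambda>n. integral\<^sup>L M (g n)) \<longlonglongrightarrow> (SUP n. integral\<^sup>L M (g n))"
    by (rule LIMSEQ_incseq_SUP[OF bdd inc])
  have "integrable M h" "integral\<^sup>L M h = (SUP n. integral\<^sup>L M (g n))"
    using integral_monotone_convergence_nonneg[OF gi _ _ _ lim hm] gm g0 gl by auto
  moreover have "(SUP n. integral\<^sup>L M (g n)) \<le> K" by (rule cSUP_least) (auto simp: gK)
  ultimately show ?thesis by simp
qed

lemma min_real_of_nat_tendsto: "(\<lambda>n. min (a::real) (real n)) \<longlonglongrightarrow> a"
proof -
  obtain n0 where "a \<le> real n0" using real_arch_simple by blast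
  then have "eventually (\<lambda>n. min a (real n) = a) sequentially"
    unfolding eventually_sequentially by (intro exI[of _ n0]) auto
  then show ?thesis by (rule tendsto_eventually)
qed

definition clip :: "real \<Rightarrow> real \<Rightarrow> real" where
  "clip c a = max (- c) (min c a)"

lemma clip_real_of_nat_tendsto: "(\<lambda>n. clip (real n) a) \<longlonglongrightarrow> a"
proof -
  obtain n0 where "\<bar>a\<bar> \<le> real n0" using real_arch_simple by blast
  then have "eventually (\<lambda>n. clip (real n) a = a) sequentially"
    unfolding eventually_sequentially clip_def by (intro exI[of _ n0]) auto
  then show ?thesis by (rule tendsto_eventually)
qed

lemma power2_clip_le:
  assumes c: "0 \<le> c"
  shows "(clip c a)\<^sup>2 \<le> clip c a * a"
proof (cases "a \<le> -c")
  case True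
  then have "clip c a = - c" unfolding clip_def using c by auto
  moreover have "c * a \<le> c * (- c)" using True c by (intro mult_left_mono) auto
  ultimately show ?thesis by (simp add: power2_eq_square)
next
  case False
  show ?thesis
  proof (cases "c \<le> a")
    case True
    then have "clip c a = c" unfolding clip_def using c by auto
    moreover have "c * c \<le> c * a" using True c by (intro mult_left_mono) auto
    ultimately show ?thesis by (simp add: power2_eq_square)
  next
    case False
    then have "clip c a = a" unfolding clip_def using \<open>\<not> a \<le> -c\<close> by auto
    then show ?thesis by (simp add: power2_eq_square)
  qed
qed

lemma abs_clip_le: "0 \<le> c \<Longrightarrow> \<bar>clip c a\<bar> \<le> c"
  unfolding clip_def by auto

lemma power2_clip_mono: "0 \<le> c \<Longrightarrow> c \<le> d \<Longrightarrow> (clip c a)\<^sup>2 \<le> (clip d a)\<^sup>2"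
  unfolding clip_def by (auto simp: abs_le_square_iff[symmetric])

lemma borel_measurable_clip[measurable]:
  "f \<in> borel_measurable M \<Longrightarrow> (\<lambda>x. clip c (f x)) \<in> borel_measurable M"
  unfolding clip_def by (auto intro!: borel_measurable_max borel_measurable_min)

subsection \<open>The filtration\<close>

locale noise_filtration =
  fixes M :: "'a measure" and w :: "nat \<Rightarrow> 'a \<Rightarrow> real" and N :: nat
  assumes prob_space: "prob_space M" and complete: "complete_measure M"
    and noise_measurable: "\<And>k. k < N \<Longrightarrow> w k \<in> borel_measurable M"
    and noise_square_integrable: "\<And>k. k < N \<Longrightarrow> integrable M (\<lambda>x. (w k x)\<^sup>2)"
    and noise_cond_variance:
      "\<And>k. k < N \<Longrightarrow> AE x in M. real_cond_exp M (filt M w k) (\<lambda>y. (w k y)\<^sup>2) x = 1"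

sublocale noise_filtration \<subseteq> prob_space M
  by (rule prob_space)

context noise_filtration
begin

text \<open>\<open>F k\<close> is generated by \<open>w 0, \<dots>, w (k - 1)\<close>: it is \<open>F\<^sub>k\<^sub>-\<^sub>1\<close> of the statement.\<close>
abbreviation F :: "nat \<Rightarrow> 'a measure" where
  "F \<equiv> filt M w"

lemma space_filt[simp]: "space (F j) = space M"
  unfolding filt_def by (simp add: space_measure_of_conv)

lemma sets_filt:
  "sets (F j) = sigma_sets (space M) ({w i -` B \<inter> space M | i B. i < j \<and> B \<in> sets borel} \<union> null_sets M)"
  unfolding filt_def
  by (rule sets_measure_of) (auto dest: null_setsD2 sets.sets_into_space)

lemma sets_filt_mono: "j \<le> j' \<Longrightarrow> sets (F j) \<subseteq> sets (F j')"
  unfolding sets_filt by (rule sigma_sets_mono') (auto 4 4 dest: order.strict_trans2)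

lemma null_sets_in_filt: "A \<in> null_sets M \<Longrightarrow> A \<in> sets (F j)"
  unfolding sets_filt by (auto intro: sigma_sets.Basic)

lemma noise_measurable_filt: "i < j \<Longrightarrow> w i \<in> borel_measurable (F j)"
  by (rule measurableI) (auto simp: sets_filt intro!: sigma_sets.Basic)

lemma subalgebra_filt: "j \<le> N \<Longrightarrow> subalgebra M (F j)"
  unfolding subalgebra_def sets_filt using noise_measurable
  by (auto intro!: sets.sigma_sets_subset)

lemma subalgebra_filt_mono: "j \<le> j' \<Longrightarrow> subalgebra (F j') (F j)"
  using sets_filt_mono by (simp add: subalgebra_def)

lemma sigma_finite_subalgebra_filt: "j \<le> N \<Longrightarrow> sigma_finite_subalgebra M (F j)"
  by (rule finite_measure_subalgebra_is_sigma_finite)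
    (simp add: finite_measure_subalgebra_def finite_measure_subalgebra_axioms_def
      subalgebra_filt finite_measure_axioms)

lemma borel_measurable_filt_imp_M:
  "j \<le> N \<Longrightarrow> f \<in> borel_measurable (F j) \<Longrightarrow> f \<in> borel_measurable M"
  using measurable_from_subalg[OF subalgebra_filt] by blast

lemma borel_measurable_filt_mono:
  "j \<le> j' \<Longrightarrow> f \<in> borel_measurable (F j) \<Longrightarrow> f \<in> borel_measurable (F j')"
  using measurable_from_subalg[OF subalgebra_filt_mono] by blast

text \<open>This is where completeness of \<open>M\<close> is used.\<close>
lemma borel_measurable_filt_AE_cong:
  assumes f: "f \<in> borel_measurable (F j)" and ae: "AE x in M. f x = g x"
  shows "g \<in> borel_measurable (F j)"
proof -
  obtain Z where Z0: "{x \<in> space M. f x \<noteq> g x} \<subseteq> Z" "emeasure M Z = 0" "Z \<in> sets M"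
    using AE_E[OF ae] by blast
  then have Z: "{x \<in> space M. f x \<noteq> g x} \<subseteq> Z" "Z \<in> null_sets M" by (auto intro: null_setsI)
  show ?thesis
  proof (rule measurableI)
    fix B :: "'b set" assume B: "B \<in> sets borel"
    have eq: "g -` B \<inter> space (F j) = ((f -` B \<inter> space (F j)) - Z) \<union> (g -` B \<inter> space M \<inter> Z)"
      using Z(1) by auto
    have "g -` B \<inter> space M \<inter> Z \<in> sets M"
      by (rule complete_measure.complete[OF complete _ Z(2)]) blast
    then have "g -` B \<inter> space M \<inter> Z \<in> null_sets M"
      using null_sets_subset[OF Z(2)] by blast
    then have "g -` B \<inter> space M \<inter> Z \<in> sets (F j)" by (rule null_sets_in_filt)
    then show "g -` B \<inter> space (F j) \<in> sets (F j)"
      unfolding eq using measurable_sets[OF f B] null_sets_in_filt[OF Z(2)] by auto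
  qed auto
qed

lemma sqint_filt_imp_L2: "j \<le> N \<Longrightarrow> sqint M (F j) X \<Longrightarrow> L2 M X"
  using sqint_subalgebra subalgebra_filt by blast

lemma sqint_filt_mono: "j \<le> j' \<Longrightarrow> sqint M (F j) X \<Longrightarrow> sqint M (F j') X"
  using sqint_subalgebra subalgebra_filt_mono by blast

lemma cexp_nth[simp]: "cexp M G X x $ i = real_cond_exp M G (\<lambda>y. X y $ i) x"
  by (simp add: cexp_def)

lemma cexp_measurable: "cexp M G X \<in> borel_measurable G"
  by (rule borel_measurable_vec_componentwise) (simp add: borel_measurable_cond_exp)

lemma cexp_L2_contraction:
  assumes j: "j \<le> N" and X: "L2 M X"
  shows "sqint M (F j) (cexp M (F j) X)"
    "(\<integral>x. (norm (cexp M (F j) X x))\<^sup>2 \<partial>M) \<le> (\<integral>x. (norm (X x))\<^sup>2 \<partial>M)"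
proof -
  interpret S: sigma_finite_subalgebra M "F j" by (rule sigma_finite_subalgebra_filt[OF j])
  have comp: "integrable M (\<lambda>x. (cexp M (F j) X x $ i)\<^sup>2) \<and>
      (\<integral>x. (cexp M (F j) X x $ i)\<^sup>2 \<partial>M) \<le> (\<integral>x. (X x $ i)\<^sup>2 \<partial>M)" for i
  proof -
    let ?E = "real_cond_exp M (F j) (\<lambda>y. X y $ i)"
    have i1: "integrable M (\<lambda>y. X y $ i)" and i2: "integrable M (\<lambda>y. (X y $ i)\<^sup>2)"
      using L2_vec_nth[OF X] by auto
    have cv: "convex_on UNIV (\<lambda>t::real. t\<^sup>2)" using convex_power2 by simp
    have int: "integrable M (\<lambda>x. (?E x)\<^sup>2)"
      using S.integrable_convex_cond_exp[of "\<lambda>y. X y $ i" UNIV _ _ "\<lambda>t. t\<^sup>2"] i1 i2 cv by auto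
    have "AE x in M. (?E x)\<^sup>2 \<le> real_cond_exp M (F j) (\<lambda>x. (X x $ i)\<^sup>2) x"
      using S.real_cond_exp_jensens_inequality(2)[of "\<lambda>y. X y $ i" UNIV _ _ "\<lambda>t. t\<^sup>2"] i1 i2 cv
      by auto
    then have "(\<integral>x. (?E x)\<^sup>2 \<partial>M) \<le> integral\<^sup>L M (real_cond_exp M (F j) (\<lambda>x. (X x $ i)\<^sup>2))"
      by (intro integral_mono_AE int S.real_cond_exp_int(1)[OF i2])
    also have "\<dots> = (\<integral>x. (X x $ i)\<^sup>2 \<partial>M)" by (rule S.real_cond_exp_int(2)[OF i2])
    finally show ?thesis using int by simp
  qed
  show "sqint M (F j) (cexp M (F j) X)"
    "(\<integral>x. (norm (cexp M (F j) X x))\<^sup>2 \<partial>M) \<le> (\<integral>x. (norm (X x))\<^sup>2 \<partial>M)"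
    using sqint_of_componentwise_contraction[OF cexp_measurable X comp] by auto
qed

lemma L2_cexp: "j \<le> N \<Longrightarrow> L2 M X \<Longrightarrow> L2 M (cexp M (F j) X)"
  using cexp_L2_contraction(1) sqint_filt_imp_L2 by blast

lemma cexp_add:
  assumes j: "j \<le> N"
    and X: "\<And>i. integrable M (\<lambda>x. X x $ i)" and Y: "\<And>i. integrable M (\<lambda>x. Y x $ i)"
  shows "AE x in M. cexp M (F j) (\<lambda>x. X x + Y x) x = cexp M (F j) X x + cexp M (F j) Y x"
proof -
  interpret S: sigma_finite_subalgebra M "F j" by (rule sigma_finite_subalgebra_filt[OF j])
  have "AE x in M. \<forall>i\<in>UNIV. real_cond_exp M (F j) (\<lambda>y. X y $ i + Y y $ i) x
      = real_cond_exp M (F j) (\<lambda>y. X y $ i) x + real_cond_exp M (F j) (\<lambda>y. Y y $ i) x"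
    by (rule AE_finite_allI) (use S.real_cond_exp_add X Y in auto)
  then show ?thesis by eventually_elim (simp add: vec_eq_iff)
qed

lemma cexp_add_L2:
  "j \<le> N \<Longrightarrow> L2 M X \<Longrightarrow> L2 M Y \<Longrightarrow>
    AE x in M. cexp M (F j) (\<lambda>x. X x + Y x) x = cexp M (F j) X x + cexp M (F j) Y x"
  by (rule cexp_add) (auto dest: L2_vec_nth(2))

lemma cexp_AE_cong:
  assumes j: "j \<le> N" and ae: "AE x in M. X x = Y x"
    and X: "X \<in> borel_measurable M" and Y: "Y \<in> borel_measurable M"
  shows "AE x in M. cexp M (F j) X x = cexp M (F j) Y x"
proof -
  interpret S: sigma_finite_subalgebra M "F j" by (rule sigma_finite_subalgebra_filt[OF j])
  have "AE x in M. \<forall>i\<in>UNIV. real_cond_exp M (F j) (\<lambda>y. X y $ i) x = real_cond_exp M (F j) (\<lambda>y. Y y $ i) x"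
    by (intro AE_finite_allI S.real_cond_exp_cong)
      (use ae borel_measurable_vec_nth[OF X] borel_measurable_vec_nth[OF Y] in auto)
  then show ?thesis by eventually_elim (simp add: vec_eq_iff)
qed

lemma integral_inner_cexp:
  assumes j: "j \<le> N" and Z: "sqint M (F j) Z" and X: "L2 M X"
  shows "(\<integral>x. inner (Z x) (cexp M (F j) X x) \<partial>M) = (\<integral>x. inner (Z x) (X x) \<partial>M)"
proof -
  interpret S: sigma_finite_subalgebra M "F j" by (rule sigma_finite_subalgebra_filt[OF j])
  have Z2: "L2 M Z" using sqint_filt_imp_L2[OF j Z] .
  have pi: "integrable M (\<lambda>x. Z x $ i * X x $ i)" for i
    by (rule integrable_mult_of_square_integrable)
      (use L2_vec_nth(1)[OF Z2] L2_vec_nth(1)[OF X] borel_measurable_vec_nth sqint_measurable[OF Z2]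
        sqint_measurable[OF X] in auto)
  have c: "integrable M (\<lambda>x. Z x $ i * real_cond_exp M (F j) (\<lambda>y. X y $ i) x)"
       "(\<integral>x. Z x $ i * real_cond_exp M (F j) (\<lambda>y. X y $ i) x \<partial>M) = (\<integral>x. Z x $ i * X x $ i \<partial>M)" for i
    using S.real_cond_exp_intg[OF pi] borel_measurable_vec_nth[OF sqint_measurable[OF Z]]
      borel_measurable_vec_nth[OF sqint_measurable[OF X]] by auto
  show ?thesis
    unfolding inner_vec_sum using c pi by (simp add: Bochner_Integration.integral_sum)
qed

subsection \<open>Multiplication by the noise\<close>

lemma integral_mult_noise_square:
  assumes k: "k < N" and f: "f \<in> borel_measurable (F k)"
    and fi: "integrable M (\<lambda>x. f x * (w k x)\<^sup>2)"
  shows "(\<integral>x. f x * (w k x)\<^sup>2 \<partial>M) = integral\<^sup>L M f"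
proof -
  interpret S: sigma_finite_subalgebra M "F k" by (rule sigma_finite_subalgebra_filt) (use k in simp)
  have fM: "f \<in> borel_measurable M" using borel_measurable_filt_imp_M[OF _ f] k by simp
  have "(\<integral>x. f x * (w k x)\<^sup>2 \<partial>M) = (\<integral>x. f x * real_cond_exp M (F k) (\<lambda>y. (w k y)\<^sup>2) x \<partial>M)"
    using S.real_cond_exp_intg(2)[OF fi f] noise_measurable[OF k] by simp
  also have "\<dots> = integral\<^sup>L M f"
    by (rule integral_cong_AE) (use fM noise_cond_variance[OF k] in auto)
  finally show ?thesis .
qed

lemma integrable_mult_noise_square:
  assumes k: "k < N" and f: "f \<in> borel_measurable (F k)" and f0: "\<And>x. 0 \<le> f x"
    and fi: "integrable M f"
  shows "integrable M (\<lambda>x. f x * (w k x)\<^sup>2)"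
proof -
  have fM: "f \<in> borel_measurable M" using borel_measurable_filt_imp_M[OF _ f] k by simp
  have wk: "w k \<in> borel_measurable M" using noise_measurable[OF k] .
  define g where "g = (\<lambda>n x. min (f x) (real n) * (w k x)\<^sup>2)"
  have "integrable M (\<lambda>x. f x * (w k x)\<^sup>2) \<and> (\<integral>x. f x * (w k x)\<^sup>2 \<partial>M) \<le> integral\<^sup>L M f"
  proof (rule integrable_bounded_monotone_limit)
    show gi: "integrable M (g n)" for n
    proof -
      have "integrable M (\<lambda>x. real n * (w k x)\<^sup>2)" using noise_square_integrable[OF k] by simp
      then show ?thesis unfolding g_def
        by (rule Bochner_Integration.integrable_bound)
          (use fM wk f0 in \<open>auto intro!: mult_right_mono simp: abs_mult\<close>)
    qed
    show "0 \<le> g n x" for n x unfolding g_def using f0[of x] by simp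
    show "mono (\<lambda>n. g n x)" for x unfolding g_def mono_def by (auto intro!: mult_right_mono)
    show "(\<lambda>n. g n x) \<longlonglongrightarrow> f x * (w k x)\<^sup>2" for x
      unfolding g_def by (intro tendsto_mult_right min_real_of_nat_tendsto)
    show "(\<lambda>x. f x * (w k x)\<^sup>2) \<in> borel_measurable M" using fM wk by simp
    show "integral\<^sup>L M (g n) \<le> integral\<^sup>L M f" for n
    proof -
      have fn: "(\<lambda>x. min (f x) (real n)) \<in> borel_measurable (F k)" using f by simp
      have "integral\<^sup>L M (g n) = (\<integral>x. min (f x) (real n) \<partial>M)"
        unfolding g_def by (rule integral_mult_noise_square[OF k fn]) (use gi[of n] in \<open>simp only: g_def\<close>)
      also have "\<dots> \<le> integral\<^sup>L M f"
      proof (rule integral_mono[OF _ fi])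
        show "integrable M (\<lambda>x. min (f x) (real n))"
          by (rule Bochner_Integration.integrable_bound[OF fi]) (use fM f0 in auto)
      qed auto
      finally show ?thesis .
    qed
  qed
  then show ?thesis ..
qed

lemma sqint_noise_scaleR:
  assumes k: "k < N" and X: "sqint M (F k) X"
  shows "sqint M (F (Suc k)) (\<lambda>z. w k z *\<^sub>R X z)"
proof -
  have Xm: "X \<in> borel_measurable (F (Suc k))"
    using borel_measurable_filt_mono[OF _ sqint_measurable[OF X]] by simp
  have "integrable M (\<lambda>z. (norm (X z))\<^sup>2 * (w k z)\<^sup>2)"
    by (rule integrable_mult_noise_square[OF k]) (use X in \<open>auto simp: sqint_def\<close>)
  then show ?thesis
    unfolding sqint_def using Xm noise_measurable_filt[of k "Suc k"]
    by (auto simp: power_mult_distrib mult.commute intro!: borel_measurable_scaleR)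
qed

lemma L2_noise_scaleR:
  assumes k: "k < N" and X: "sqint M (F k) X"
  shows "L2 M (\<lambda>z. w k z *\<^sub>R X z)"
  using sqint_filt_imp_L2[OF _ sqint_noise_scaleR[OF k X]] k by simp

text \<open>The truncations \<open>c\<^sub>n\<close> of \<open>Z = E[w\<^sub>k Y | F k]\<close> are bounded and \<open>F k\<close>-measurable, so
  \<open>E[c\<^sub>n\<^sup>2] \<le> E[c\<^sub>n Z] = E[c\<^sub>n w\<^sub>k Y] \<le> E[c\<^sub>n\<^sup>2 w\<^sub>k\<^sup>2]/2 + E[Y\<^sup>2]/2 = E[c\<^sub>n\<^sup>2]/2 + E[Y\<^sup>2]/2\<close>.\<close>
lemma integral_clip_cond_exp_noise_le:
  assumes k: "k < N" and Y2: "integrable M (\<lambda>x. (Y x)\<^sup>2)" and Ym: "Y \<in> borel_measurable M"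
  defines "Z \<equiv> real_cond_exp M (F k) (\<lambda>z. w k z * Y z)"
  shows "integrable M (\<lambda>x. (clip (real n) (Z x))\<^sup>2) \<and>
    (\<integral>x. (clip (real n) (Z x))\<^sup>2 \<partial>M) \<le> (\<integral>x. (Y x)\<^sup>2 \<partial>M)"
proof -
  interpret S: sigma_finite_subalgebra M "F k" by (rule sigma_finite_subalgebra_filt) (use k in simp)
  have wk: "w k \<in> borel_measurable M" using noise_measurable[OF k] .
  have wy: "integrable M (\<lambda>z. w k z * Y z)"
    by (rule integrable_mult_of_square_integrable) (use noise_square_integrable[OF k] Y2 wk Ym in auto)
  have wym: "(\<lambda>z. w k z * Y z) \<in> borel_measurable M" using wk Ym by simp
  have Zi: "integrable M Z" unfolding Z_def by (rule S.real_cond_exp_int(1)[OF wy])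
  have ZF: "Z \<in> borel_measurable (F k)" unfolding Z_def by simp
  have ZM: "Z \<in> borel_measurable M" using Zi by auto
  let ?c = "\<lambda>x. clip (real n) (Z x)"
  have cF: "?c \<in> borel_measurable (F k)" using ZF by simp
  have cM: "?c \<in> borel_measurable M" using ZM by simp
  have cb: "\<bar>?c x\<bar> \<le> real n" for x by (rule abs_clip_le) simp
  have cb2: "(?c x)\<^sup>2 \<le> (real n)\<^sup>2" for x
    using cb[of x] by (simp add: abs_le_square_iff[symmetric])
  have gi: "integrable M (\<lambda>x. (?c x)\<^sup>2)"
    by (rule Bochner_Integration.integrable_bound[of _ "\<lambda>x. (real n)\<^sup>2"]) (use cM cb2 in auto)
  have i1: "integrable M (\<lambda>x. ?c x * (w k x * Y x))"
  proof (rule Bochner_Integration.integrable_bound[of _ "\<lambda>x. real n * \<bar>w k x * Y x\<bar>"])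
    show "integrable M (\<lambda>x. real n * \<bar>w k x * Y x\<bar>)" using wy by simp
    show "AE x in M. norm (?c x * (w k x * Y x)) \<le> norm (real n * \<bar>w k x * Y x\<bar>)"
      using cb by (auto simp: abs_mult intro!: mult_right_mono)
  qed (use cM wym in simp)
  have e1: "(\<integral>x. ?c x * Z x \<partial>M) = (\<integral>x. ?c x * (w k x * Y x) \<partial>M)"
    using S.real_cond_exp_intg(2)[OF i1 cF wym] unfolding Z_def by simp
  have i2: "integrable M (\<lambda>x. ?c x * Z x)"
    by (rule Bochner_Integration.integrable_bound[of _ "\<lambda>x. real n * \<bar>Z x\<bar>"])
      (use Zi cM ZM cb in \<open>auto simp: abs_mult intro!: mult_right_mono\<close>)
  have l1: "(\<integral>x. (?c x)\<^sup>2 \<partial>M) \<le> (\<integral>x. ?c x * Z x \<partial>M)"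
    by (rule integral_mono[OF gi i2]) (rule power2_clip_le, simp)
  have i3: "integrable M (\<lambda>x. (?c x)\<^sup>2 * (w k x)\<^sup>2)"
    by (rule Bochner_Integration.integrable_bound[of _ "\<lambda>x. (real n)\<^sup>2 * (w k x)\<^sup>2"])
      (use noise_square_integrable[OF k] cM wk cb2 in \<open>auto intro!: mult_right_mono\<close>)
  have e3: "(\<integral>x. (?c x)\<^sup>2 * (w k x)\<^sup>2 \<partial>M) = (\<integral>x. (?c x)\<^sup>2 \<partial>M)"
    by (rule integral_mult_noise_square[OF k _ i3]) (use cF in simp)
  have "(\<integral>x. ?c x * (w k x * Y x) \<partial>M) \<le> (\<integral>x. (?c x)\<^sup>2 * (w k x)\<^sup>2 / 2 + (Y x)\<^sup>2 / 2 \<partial>M)"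
  proof (rule integral_mono[OF i1])
    show "integrable M (\<lambda>x. (?c x)\<^sup>2 * (w k x)\<^sup>2 / 2 + (Y x)\<^sup>2 / 2)" using i3 Y2 by simp
    show "?c x * (w k x * Y x) \<le> (?c x)\<^sup>2 * (w k x)\<^sup>2 / 2 + (Y x)\<^sup>2 / 2" for x
      using mult_le_weighted_squares[of 1 "?c x * w k x" "Y x"]
      by (simp add: power_mult_distrib mult.assoc)
  qed
  also have "\<dots> = (\<integral>x. (?c x)\<^sup>2 \<partial>M) / 2 + (\<integral>x. (Y x)\<^sup>2 \<partial>M) / 2"
    using i3 Y2 e3 by simp
  finally show ?thesis
    using gi l1 e1 by simp
qed

lemma real_cond_exp_noise_mult_L2_contraction:
  assumes k: "k < N" and Y2: "integrable M (\<lambda>x. (Y x)\<^sup>2)" and Ym: "Y \<in> borel_measurable M"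
  defines "Z \<equiv> real_cond_exp M (F k) (\<lambda>z. w k z * Y z)"
  shows "integrable M (\<lambda>x. (Z x)\<^sup>2) \<and> (\<integral>x. (Z x)\<^sup>2 \<partial>M) \<le> (\<integral>x. (Y x)\<^sup>2 \<partial>M)"
proof (rule integrable_bounded_monotone_limit)
  show "integrable M (\<lambda>x. (clip (real n) (Z x))\<^sup>2)"
    "(\<integral>x. (clip (real n) (Z x))\<^sup>2 \<partial>M) \<le> (\<integral>x. (Y x)\<^sup>2 \<partial>M)" for n
    using integral_clip_cond_exp_noise_le[OF k Y2 Ym, of n] unfolding Z_def by auto
  show "0 \<le> (clip (real n) (Z x))\<^sup>2" for n x by simp
  show "mono (\<lambda>n. (clip (real n) (Z x))\<^sup>2)" for x
    unfolding mono_def by (auto intro!: power2_clip_mono)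
  show "(\<lambda>n. (clip (real n) (Z x))\<^sup>2) \<longlonglongrightarrow> (Z x)\<^sup>2" for x
    by (intro tendsto_power clip_real_of_nat_tendsto)
  show "(\<lambda>x. (Z x)\<^sup>2) \<in> borel_measurable M"
    unfolding Z_def by (rule borel_measurable_power, rule borel_measurable_cond_exp2)
qed

lemma cexp_noise_L2_contraction:
  assumes k: "k < N" and Y: "L2 M Y"
  shows "sqint M (F k) (cexp M (F k) (\<lambda>z. w k z *\<^sub>R Y z))"
    "(\<integral>x. (norm (cexp M (F k) (\<lambda>z. w k z *\<^sub>R Y z) x))\<^sup>2 \<partial>M) \<le> (\<integral>x. (norm (Y x))\<^sup>2 \<partial>M)"
proof -
  have "integrable M (\<lambda>x. (cexp M (F k) (\<lambda>z. w k z *\<^sub>R Y z) x $ i)\<^sup>2) \<and>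
      (\<integral>x. (cexp M (F k) (\<lambda>z. w k z *\<^sub>R Y z) x $ i)\<^sup>2 \<partial>M) \<le> (\<integral>x. (Y x $ i)\<^sup>2 \<partial>M)" for i
    using real_cond_exp_noise_mult_L2_contraction[OF k L2_vec_nth(1)[OF Y]
        borel_measurable_vec_nth[OF sqint_measurable[OF Y]]]
    by simp
  from sqint_of_componentwise_contraction[OF cexp_measurable Y this]
  show "sqint M (F k) (cexp M (F k) (\<lambda>z. w k z *\<^sub>R Y z))"
    "(\<integral>x. (norm (cexp M (F k) (\<lambda>z. w k z *\<^sub>R Y z) x))\<^sup>2 \<partial>M) \<le> (\<integral>x. (norm (Y x))\<^sup>2 \<partial>M)" .
qed

lemma integral_inner_cexp_noise:
  assumes k: "k < N" and Z: "sqint M (F k) Z" and Y: "L2 M Y"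
  shows "(\<integral>x. inner (Z x) (cexp M (F k) (\<lambda>z. w k z *\<^sub>R Y z) x) \<partial>M)
       = (\<integral>x. inner (w k x *\<^sub>R Z x) (Y x) \<partial>M)"
proof -
  interpret S: sigma_finite_subalgebra M "F k" by (rule sigma_finite_subalgebra_filt) (use k in simp)
  have WZ: "L2 M (\<lambda>z. w k z *\<^sub>R Z z)" using L2_noise_scaleR[OF k Z] .
  have pi0: "integrable M (\<lambda>x. (w k x *\<^sub>R Z x) $ i * Y x $ i)" for i
    by (rule integrable_mult_of_square_integrable[OF L2_vec_nth(1)[OF WZ] L2_vec_nth(1)[OF Y]
          borel_measurable_vec_nth[OF sqint_measurable[OF WZ]]
          borel_measurable_vec_nth[OF sqint_measurable[OF Y]]])
  have eqf: "(\<lambda>x. Z x $ i * (w k x * Y x $ i)) = (\<lambda>x. (w k x *\<^sub>R Z x) $ i * Y x $ i)" for i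
    by (simp add: fun_eq_iff algebra_simps)
  have c: "integrable M (\<lambda>x. Z x $ i * real_cond_exp M (F k) (\<lambda>y. w k y * Y y $ i) x)"
       "(\<integral>x. Z x $ i * real_cond_exp M (F k) (\<lambda>y. w k y * Y y $ i) x \<partial>M)
          = (\<integral>x. Z x $ i * (w k x * Y x $ i) \<partial>M)" for i
    using S.real_cond_exp_intg[of "\<lambda>x. Z x $ i" "\<lambda>x. w k x * Y x $ i"] pi0[of i] eqf[of i]
      borel_measurable_vec_nth[OF sqint_measurable[OF Z]]
      borel_measurable_vec_nth[OF sqint_measurable[OF Y]] noise_measurable[OF k]
    by auto
  show ?thesis
    unfolding inner_vec_sum using c pi0 eqf by (simp add: Bochner_Integration.integral_sum)
qed

lemma integrable_noise_scaleR_nth: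
  assumes k: "k < N" and Y: "L2 M Y"
  shows "integrable M (\<lambda>x. (w k x *\<^sub>R Y x) $ i)"
  using integrable_mult_of_square_integrable[of M "w k" "\<lambda>x. Y x $ i"] noise_square_integrable[OF k]
    L2_vec_nth(1)[OF Y] noise_measurable[OF k] borel_measurable_vec_nth[OF sqint_measurable[OF Y]]
  by simp

lemma sqint_filt_add:
  "j \<le> N \<Longrightarrow> sqint M (F j) X \<Longrightarrow> sqint M (F j) Y \<Longrightarrow> sqint M (F j) (\<lambda>x. X x + (Y x :: real^'d))"
  by (rule sqint_add) (auto dest: sqint_filt_imp_L2 sqint_measurable)

lemma sqint_filt_matrix_vector:
  "j \<le> N \<Longrightarrow> sqint M (F j) X \<Longrightarrow> sqint M (F j) (\<lambda>x. (A::real^'n^'m) *v X x)"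
  by (rule sqint_matrix_vector) (auto dest: sqint_filt_imp_L2 sqint_measurable)

lemma predL2_zero: "predL2 M w N (\<lambda>k x. 0)"
  by (simp add: predL2_def sqint_zero)

lemma predL2_L2: "predL2 M w N u \<Longrightarrow> k < N \<Longrightarrow> L2 M (u k)"
  unfolding predL2_def by (meson less_imp_le sqint_filt_imp_L2)

lemma adaptL2_L2: "adaptL2 M w N u \<Longrightarrow> k < N \<Longrightarrow> L2 M (u k)"
  unfolding adaptL2_def by (meson Suc_leI sqint_filt_imp_L2)

lemma predL2_imp_adaptL2: "predL2 M w N u \<Longrightarrow> adaptL2 M w N u"
  unfolding predL2_def adaptL2_def using sqint_filt_mono[OF le_SucI[OF order_refl]] by blast

definition sqnorm :: "(nat \<Rightarrow> 'a \<Rightarrow> real^'d) \<Rightarrow> real" where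
  "sqnorm v = (\<Sum>j<N. \<integral>x. (norm (v j x))\<^sup>2 \<partial>M)"

lemma sqnorm_nonneg: "0 \<le> sqnorm v"
  unfolding sqnorm_def by (intro sum_nonneg) auto

lemma integral_power2_norm_le_sqnorm: "k < N \<Longrightarrow> (\<integral>x. (norm (v k x))\<^sup>2 \<partial>M) \<le> sqnorm v"
  unfolding sqnorm_def by (rule member_le_sum) auto

lemma ipp_eq_sum:
  fixes f g :: "nat \<Rightarrow> 'a \<Rightarrow> real^'d"
  assumes "\<And>k. k < N \<Longrightarrow> L2 M (f k)" "\<And>k. k < N \<Longrightarrow> L2 M (g k)"
  shows "ipp M N f g = (\<Sum>k<N. \<integral>x. inner (f k x) (g k x) \<partial>M)"
  unfolding ipp_def using assms
  by (intro Bochner_Integration.integral_sum) (auto intro: L2_integrable_inner)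

lemma ipp_self_eq_sqnorm: "predL2 M w N v \<Longrightarrow> ipp M N v v = sqnorm v"
  using ipp_eq_sum[of v v] predL2_L2[of v] by (simp add: sqnorm_def power2_norm_eq_inner)

lemma ipp_self_nonneg: "0 \<le> ipp M N v v"
  unfolding ipp_def by (intro integral_nonneg_AE) (auto intro!: sum_nonneg)

lemma ipp_add_left:
  fixes f h v :: "nat \<Rightarrow> 'a \<Rightarrow> real^'d"
  assumes "\<And>k. k < N \<Longrightarrow> L2 M (f k)" "\<And>k. k < N \<Longrightarrow> L2 M (h k)" "\<And>k. k < N \<Longrightarrow> L2 M (v k)"
  shows "ipp M N (\<lambda>k x. f k x + h k x) v = ipp M N f v + ipp M N h v"
proof -
  have "ipp M N (\<lambda>k x. f k x + h k x) v = (\<Sum>k<N. \<integral>x. inner (f k x + h k x) (v k x) \<partial>M)"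
    by (rule ipp_eq_sum) (use assms in \<open>auto intro!: L2_add\<close>)
  also have "\<dots> = (\<Sum>k<N. (\<integral>x. inner (f k x) (v k x) \<partial>M) + (\<integral>x. inner (h k x) (v k x) \<partial>M))"
    by (rule sum.cong[OF refl]) (use assms in \<open>auto intro!: integral_inner_add_left\<close>)
  also have "\<dots> = ipp M N f v + ipp M N h v"
    using ipp_eq_sum[of f v] ipp_eq_sum[of h v] assms by (simp add: sum.distrib)
  finally show ?thesis .
qed

end

subsection \<open>The backward state equation\<close>

locale state_equation = noise_filtration M w N
  for M :: "'a measure" and w :: "nat \<Rightarrow> 'a \<Rightarrow> real" and N :: nat +
  fixes A C :: "nat \<Rightarrow> real^'n^'n" and B :: "nat \<Rightarrow> real^'m^'n"
begin

definition backward_step ::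
    "nat \<Rightarrow> (nat \<Rightarrow> 'a \<Rightarrow> real^'n) \<Rightarrow> (nat \<Rightarrow> 'a \<Rightarrow> real^'m) \<Rightarrow> ('a \<Rightarrow> real^'n) \<Rightarrow> 'a \<Rightarrow> real^'n" where
  "backward_step k q u Y = (\<lambda>x. A k *v cexp M (F k) Y x + B k *v u k x
      + C k *v cexp M (F k) (\<lambda>z. w k z *\<^sub>R Y z) x + q k x)"

lemma is_sol_iff:
  "is_sol M w N A B C q xi u y \<longleftrightarrow>
     (\<forall>k<N. sqint M (F (Suc k)) (y k)) \<and> sqint M (F N) (y N) \<and> (AE x in M. y N x = xi x) \<and>
     (\<forall>k<N. AE x in M. y k x = backward_step k q u (y (Suc k)) x)"
  unfolding is_sol_def backward_step_def ..

lemma sqint_backward_step: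
  assumes k: "k < N" and Y: "L2 M Y" and u: "predL2 M w N u" and q: "predL2 M w N q"
  shows "sqint M (F k) (backward_step k q u Y)"
proof -
  have kN: "k \<le> N" using k by simp
  have uk: "sqint M (F k) (u k)" and qk: "sqint M (F k) (q k)" using u q k by (auto simp: predL2_def)
  note cexp_L2_contraction(1)[OF kN Y] cexp_noise_L2_contraction(1)[OF k Y]
  then show ?thesis
    unfolding backward_step_def using uk qk
    by (intro sqint_filt_add[OF kN] sqint_filt_matrix_vector[OF kN]) auto
qed

text \<open>\<open>backward_iter q xi u j\<close> is the solution at time \<open>N - j\<close>.\<close>
primrec backward_iter ::
    "(nat \<Rightarrow> 'a \<Rightarrow> real^'n) \<Rightarrow> ('a \<Rightarrow> real^'n) \<Rightarrow> (nat \<Rightarrow> 'a \<Rightarrow> real^'m) \<Rightarrow> nat \<Rightarrow> 'a \<Rightarrow> real^'n" where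
  "backward_iter q xi u 0 = xi"
| "backward_iter q xi u (Suc j) = backward_step (N - Suc j) q u (backward_iter q xi u j)"

lemma sqint_backward_iter:
  assumes u: "predL2 M w N u" and q: "predL2 M w N q" and xi: "sqint M (F N) xi"
  shows "j \<le> N \<Longrightarrow> sqint M (F (N - j)) (backward_iter q xi u j)"
proof (induction j)
  case (Suc j)
  then have "L2 M (backward_iter q xi u j)" using sqint_filt_imp_L2[OF diff_le_self] by simp
  then show ?case using sqint_backward_step[of "N - Suc j" _ u q] u q Suc.prems by simp
qed (use xi in simp)

lemma is_sol_backward_iter:
  assumes u: "predL2 M w N u" and q: "predL2 M w N q" and xi: "sqint M (F N) xi"
  shows "is_sol M w N A B C q xi u (\<lambda>k. backward_iter q xi u (N - k))"
  unfolding is_sol_iff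
proof (intro conjI allI impI)
  fix k assume k: "k < N"
  have "sqint M (F k) (backward_iter q xi u (N - k))"
    using sqint_backward_iter[OF u q xi, of "N - k"] k by simp
  then show "sqint M (F (Suc k)) (backward_iter q xi u (N - k))" by (rule sqint_filt_mono[rotated]) simp
  have "N - k = Suc (N - Suc k)" "N - Suc (N - Suc k) = k" using k by auto
  then show "AE x in M. backward_iter q xi u (N - k) x
      = backward_step k q u (backward_iter q xi u (N - Suc k)) x"
    by simp
qed (use xi in simp_all)

lemma is_sol_sol:
  assumes "predL2 M w N u" "predL2 M w N q" "sqint M (F N) xi"
  shows "is_sol M w N A B C q xi u (sol M w N A B C q xi u)"
  unfolding sol_def by (rule someI[of "is_sol M w N A B C q xi u", OF is_sol_backward_iter[OF assms]])

lemma is_sol_L2: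
  assumes y: "is_sol M w N A B C q xi u y" and k: "k \<le> N"
  shows "L2 M (y k)"
proof (cases "k < N")
  case True
  then show ?thesis using y sqint_filt_imp_L2[of "Suc k"] by (auto simp: is_sol_def)
next
  case False
  then show ?thesis using y k sqint_filt_imp_L2[of N] by (auto simp: is_sol_def)
qed

lemma is_sol_step:
  "is_sol M w N A B C q xi u y \<Longrightarrow> k < N \<Longrightarrow> AE x in M. y k x = backward_step k q u (y (Suc k)) x"
  by (simp add: is_sol_iff)

text \<open>Solutions are in fact predictable: \<open>y k\<close> is \<open>F k\<close>-measurable, because so is the
  right-hand side of the equation and \<open>F k\<close> is complete.\<close>
lemma is_sol_predictable:
  assumes y: "is_sol M w N A B C q xi u y" and u: "predL2 M w N u" and q: "predL2 M w N q"
    and k: "k < N"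
  shows "sqint M (F k) (y k)"
proof -
  have R: "sqint M (F k) (backward_step k q u (y (Suc k)))"
    by (rule sqint_backward_step[OF k is_sol_L2[OF y] u q]) (use k in simp)
  have "AE x in M. backward_step k q u (y (Suc k)) x = y k x"
    using is_sol_step[OF y k] by auto
  from borel_measurable_filt_AE_cong[OF sqint_measurable[OF R] this]
  show ?thesis using is_sol_L2[OF y] k by (simp add: sqint_def)
qed

lemma is_sol_next_adapted:
  assumes y: "is_sol M w N A B C q xi u y" and u: "predL2 M w N u" and q: "predL2 M w N q"
    and k: "k < N"
  shows "sqint M (F (Suc k)) (y (Suc k))"
proof (cases "Suc k < N")
  case True
  then show ?thesis using is_sol_predictable[OF y u q True] by simp
next
  case False
  then have "Suc k = N" using k by simp
  then show ?thesis using y by (simp add: is_sol_def)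
qed

lemma backward_step_add:
  assumes k: "k < N" and Y1: "L2 M Y1" and Y2: "L2 M Y2"
    and uu: "\<And>x. u k x = u1 k x + u2 k x" and qq: "\<And>x. q k x = q1 k x + q2 k x"
  shows "AE x in M. backward_step k q u (\<lambda>x. Y1 x + Y2 x) x
    = backward_step k q1 u1 Y1 x + backward_step k q2 u2 Y2 x"
proof -
  have kN: "k \<le> N" using k by simp
  have "AE x in M. cexp M (F k) (\<lambda>z. w k z *\<^sub>R (Y1 z + Y2 z)) x
      = cexp M (F k) (\<lambda>z. w k z *\<^sub>R Y1 z) x + cexp M (F k) (\<lambda>z. w k z *\<^sub>R Y2 z) x"
    using cexp_add[OF kN integrable_noise_scaleR_nth[OF k Y1] integrable_noise_scaleR_nth[OF k Y2]]
    by (simp add: scaleR_right_distrib)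
  with cexp_add_L2[OF kN Y1 Y2] show ?thesis
    unfolding backward_step_def
    by eventually_elim (simp add: uu qq matrix_vector_right_distrib algebra_simps)
qed

lemma backward_step_AE_cong:
  assumes k: "k < N" and ae: "AE x in M. Y x = Y' x"
    and Y: "Y \<in> borel_measurable M" and Y': "Y' \<in> borel_measurable M"
  shows "AE x in M. backward_step k q u Y x = backward_step k q u Y' x"
proof -
  have kN: "k \<le> N" using k by simp
  have "AE x in M. w k x *\<^sub>R Y x = w k x *\<^sub>R Y' x" using ae by eventually_elim simp
  from cexp_AE_cong[OF kN this] have "AE x in M. cexp M (F k) (\<lambda>z. w k z *\<^sub>R Y z) x
      = cexp M (F k) (\<lambda>z. w k z *\<^sub>R Y' z) x"
    using Y Y' noise_measurable[OF k] by simp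
  with cexp_AE_cong[OF kN ae Y Y'] show ?thesis
    unfolding backward_step_def by eventually_elim simp
qed

lemma is_sol_superposition:
  assumes y1: "is_sol M w N A B C q1 xi1 u1 y1" and y2: "is_sol M w N A B C q2 xi2 u2 y2"
    and y: "is_sol M w N A B C q xi u y"
    and xi: "AE x in M. xi x = xi1 x + xi2 x"
    and uu: "\<And>k x. k < N \<Longrightarrow> u k x = u1 k x + u2 k x"
    and qq: "\<And>k x. k < N \<Longrightarrow> q k x = q1 k x + q2 k x"
    and kN: "k \<le> N"
  shows "AE x in M. y k x = y1 k x + y2 k x"
proof -
  have "j \<le> N \<Longrightarrow> AE x in M. y (N - j) x = y1 (N - j) x + y2 (N - j) x" for j
  proof (induction j)
    case 0
    have "AE x in M. y N x = xi x" "AE x in M. y1 N x = xi1 x" "AE x in M. y2 N x = xi2 x"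
      using y y1 y2 by (auto simp: is_sol_def)
    with xi show ?case by eventually_elim simp
  next
    case (Suc j)
    define k where "k = N - Suc j"
    have k: "k < N" and sk: "Suc k = N - j" using Suc.prems by (auto simp: k_def)
    note L = is_sol_L2[OF y Suc_leI[OF k]] is_sol_L2[OF y1 Suc_leI[OF k]]
      is_sol_L2[OF y2 Suc_leI[OF k]]
    have IH: "AE x in M. y (Suc k) x = y1 (Suc k) x + y2 (Suc k) x" using Suc sk by simp
    have "AE x in M. backward_step k q u (y (Suc k)) x
        = backward_step k q u (\<lambda>x. y1 (Suc k) x + y2 (Suc k) x) x"
      by (rule backward_step_AE_cong[OF k IH sqint_measurable[OF L(1)]
            sqint_measurable[OF L2_add[OF L(2,3)]]])
    moreover have "AE x in M. backward_step k q u (\<lambda>x. y1 (Suc k) x + y2 (Suc k) x) x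
        = backward_step k q1 u1 (y1 (Suc k)) x + backward_step k q2 u2 (y2 (Suc k)) x"
      by (rule backward_step_add) (use L k uu qq in auto)
    ultimately have "AE x in M. y k x = y1 k x + y2 k x"
      using is_sol_step[OF y k] is_sol_step[OF y1 k] is_sol_step[OF y2 k]
      by eventually_elim simp
    then show ?case by (simp add: k_def)
  qed
  from this[of "N - k"] show ?thesis using kN by simp
qed

abbreviation response :: "(nat \<Rightarrow> 'a \<Rightarrow> real^'m) \<Rightarrow> nat \<Rightarrow> 'a \<Rightarrow> real^'n" where
  "response v \<equiv> sol M w N A B C (\<lambda>k x. 0) (\<lambda>x. 0) v"

lemma is_sol_response: "predL2 M w N v \<Longrightarrow> is_sol M w N A B C (\<lambda>k x. 0) (\<lambda>x. 0) v (response v)"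
  by (rule is_sol_sol) (simp_all add: predL2_zero sqint_zero)

subsection \<open>The a priori estimate\<close>

lemma integral_backward_step_control_le:
  assumes k: "k < N"
  shows "\<exists>c\<ge>0. \<forall>Y v. L2 M Y \<longrightarrow> L2 M (v k) \<longrightarrow>
    (\<integral>x. (norm (backward_step k (\<lambda>k x. 0) v Y x))\<^sup>2 \<partial>M)
      \<le> c * ((\<integral>x. (norm (Y x))\<^sup>2 \<partial>M) + (\<integral>x. (norm (v k x))\<^sup>2 \<partial>M))"
proof -
  have kN: "k \<le> N" using k by simp
  obtain cA where cA: "cA \<ge> 0" "\<forall>x. (norm (A k *v x))\<^sup>2 \<le> cA * (norm x)\<^sup>2"
    using matrix_vector_mult_power2_bound by blast
  obtain cB where cB: "cB \<ge> 0" "\<forall>x. (norm (B k *v x))\<^sup>2 \<le> cB * (norm x)\<^sup>2"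
    using matrix_vector_mult_power2_bound by blast
  obtain cC where cC: "cC \<ge> 0" "\<forall>x. (norm (C k *v x))\<^sup>2 \<le> cC * (norm x)\<^sup>2"
    using matrix_vector_mult_power2_bound by blast
  have "(\<integral>x. (norm (backward_step k (\<lambda>k x. 0) v Y x))\<^sup>2 \<partial>M)
      \<le> 4 * (cA + cB + cC) * ((\<integral>x. (norm (Y x))\<^sup>2 \<partial>M) + (\<integral>x. (norm (v k x))\<^sup>2 \<partial>M))"
    if Y: "L2 M Y" and vk: "L2 M (v k)" for Y :: "'a \<Rightarrow> real^'n" and v :: "nat \<Rightarrow> 'a \<Rightarrow> real^'m"
  proof -
    let ?I = "\<lambda>X. \<integral>x. (norm (X x))\<^sup>2 \<partial>M"
    let ?EwY = "cexp M (F k) (\<lambda>z. w k z *\<^sub>R Y z)"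
    have c1: "L2 M (cexp M (F k) Y)" using L2_cexp[OF kN Y] .
    have c2: "L2 M ?EwY" using sqint_filt_imp_L2[OF kN cexp_noise_L2_contraction(1)[OF k Y]] .
    have "?I (\<lambda>x. A k *v cexp M (F k) Y x) \<le> cA * ?I Y"
      using integral_power2_norm_le(2)[OF c1, of "\<lambda>x. A k *v cexp M (F k) Y x" cA] cA
        sqint_measurable[OF c1] mult_left_mono[OF cexp_L2_contraction(2)[OF kN Y] cA(1)]
      by simp
    moreover have "?I (\<lambda>x. B k *v v k x) \<le> cB * ?I (v k)"
      using integral_power2_norm_le(2)[OF vk, of "\<lambda>x. B k *v v k x" cB] cB sqint_measurable[OF vk]
      by simp
    moreover have "?I (\<lambda>x. C k *v ?EwY x) \<le> cC * ?I Y"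
      using integral_power2_norm_le(2)[OF c2, of "\<lambda>x. C k *v ?EwY x" cC] cC
        sqint_measurable[OF c2] mult_left_mono[OF cexp_noise_L2_contraction(2)[OF k Y] cC(1)]
      by simp
    moreover have "?I (backward_step k (\<lambda>k x. 0) v Y) \<le> 4 * ?I (\<lambda>x. A k *v cexp M (F k) Y x)
        + 4 * ?I (\<lambda>x. B k *v v k x) + 4 * ?I (\<lambda>x. C k *v ?EwY x)"
      unfolding backward_step_def
      using integral_power2_norm_add3_le[OF L2_matrix_vector[OF c1] L2_matrix_vector[OF vk]
          L2_matrix_vector[OF c2]]
      by simp
    moreover have "0 \<le> cB * ?I Y" "0 \<le> cA * ?I (v k)" "0 \<le> cC * ?I (v k)"
      using cA(1) cB(1) cC(1) by (simp_all add: integral_nonneg_AE)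
    ultimately show ?thesis by (simp add: algebra_simps)
  qed
  moreover have "0 \<le> 4 * (cA + cB + cC)" using cA cB cC by simp
  ultimately show ?thesis by blast
qed

lemma integral_response_step_le:
  assumes k: "k < N"
  shows "\<exists>c\<ge>0. \<forall>v. predL2 M w N v \<longrightarrow> (\<integral>x. (norm (response v k x))\<^sup>2 \<partial>M)
    \<le> c * ((\<integral>x. (norm (response v (Suc k) x))\<^sup>2 \<partial>M) + sqnorm v)"
proof -
  obtain c where c0: "c \<ge> 0" and c: "\<And>Y v. L2 M Y \<Longrightarrow> L2 M (v k) \<Longrightarrow>
      (\<integral>x. (norm (backward_step k (\<lambda>k x. 0) v Y x))\<^sup>2 \<partial>M)
        \<le> c * ((\<integral>x. (norm (Y x))\<^sup>2 \<partial>M) + (\<integral>x. (norm (v k x))\<^sup>2 \<partial>M))"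
    using integral_backward_step_control_le[OF k] by blast
  have "(\<integral>x. (norm (response v k x))\<^sup>2 \<partial>M) \<le> c * ((\<integral>x. (norm (response v (Suc k) x))\<^sup>2 \<partial>M) + sqnorm v)"
    if v: "predL2 M w N v" for v
  proof -
    note y = is_sol_response[OF v]
    have Y: "L2 M (response v (Suc k))" by (rule is_sol_L2[OF y]) (use k in simp)
    have R: "L2 M (backward_step k (\<lambda>k x. 0) v (response v (Suc k)))"
      using sqint_filt_imp_L2[OF _ sqint_backward_step[OF k Y v predL2_zero]] k by simp
    have "(\<integral>x. (norm (response v k x))\<^sup>2 \<partial>M)
        = (\<integral>x. (norm (backward_step k (\<lambda>k x. 0) v (response v (Suc k)) x))\<^sup>2 \<partial>M)"
      by (rule integral_power2_norm_AE_cong[OF is_sol_step[OF y k] is_sol_L2[OF y less_imp_le[OF k]] R])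
    also have "\<dots> \<le> c * ((\<integral>x. (norm (response v (Suc k) x))\<^sup>2 \<partial>M) + (\<integral>x. (norm (v k x))\<^sup>2 \<partial>M))"
      using c[of "response v (Suc k)" v] Y predL2_L2[OF v k] by blast
    also have "\<dots> \<le> c * ((\<integral>x. (norm (response v (Suc k) x))\<^sup>2 \<partial>M) + sqnorm v)"
      using integral_power2_norm_le_sqnorm[OF k, of v] c0 by (intro mult_left_mono) auto
    finally show ?thesis .
  qed
  with c0 show ?thesis by blast
qed

lemma response_bound:
  "\<exists>K\<ge>0. \<forall>v. predL2 M w N v \<longrightarrow> (\<forall>k\<le>N. (\<integral>x. (norm (response v k x))\<^sup>2 \<partial>M) \<le> K * sqnorm v)"
proof -
  have "j \<le> N \<Longrightarrow> \<exists>K\<ge>0. \<forall>v. predL2 M w N v \<longrightarrow>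
      (\<forall>i\<le>j. (\<integral>x. (norm (response v (N - i) x))\<^sup>2 \<partial>M) \<le> K * sqnorm v)" for j
  proof (induction j)
    case 0
    have "(\<integral>x. (norm (response v N x))\<^sup>2 \<partial>M) = 0" if v: "predL2 M w N v" for v
    proof -
      have "AE x in M. response v N x = 0" using is_sol_response[OF v] by (simp add: is_sol_def)
      then show ?thesis
        using integral_power2_norm_AE_cong[OF _ is_sol_L2[OF is_sol_response[OF v]] sqint_zero] by simp
    qed
    then show ?case by (intro exI[of _ 0]) auto
  next
    case (Suc j)
    define k where "k = N - Suc j"
    have k: "k < N" and sk: "Suc k = N - j" using Suc.prems by (auto simp: k_def)
    obtain K where K0: "K \<ge> 0" and K: "\<And>v i. predL2 M w N v \<Longrightarrow> i \<le> j \<Longrightarrow>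
        (\<integral>x. (norm (response v (N - i) x))\<^sup>2 \<partial>M) \<le> K * sqnorm v"
      using Suc by auto
    obtain c where c0: "c \<ge> 0" and c: "\<And>v. predL2 M w N v \<Longrightarrow> (\<integral>x. (norm (response v k x))\<^sup>2 \<partial>M)
        \<le> c * ((\<integral>x. (norm (response v (Suc k) x))\<^sup>2 \<partial>M) + sqnorm v)"
      using integral_response_step_le[OF k] by blast
    have "(\<integral>x. (norm (response v (N - i) x))\<^sup>2 \<partial>M) \<le> max K (c * (K + 1)) * sqnorm v"
      if v: "predL2 M w N v" and i: "i \<le> Suc j" for v i
    proof (cases "i \<le> j")
      case True
      show ?thesis
        using order_trans[OF K[OF v True]
            mult_right_mono[OF max.cobounded1[of K "c * (K + 1)"] sqnorm_nonneg[of v]]] .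
    next
      case False
      then have "N - i = k" using i by (simp add: k_def)
      have "(\<integral>x. (norm (response v (Suc k) x))\<^sup>2 \<partial>M) \<le> K * sqnorm v"
        using K[OF v order_refl] sk by simp
      from order_trans[OF c[OF v] mult_left_mono[OF add_right_mono[OF this] c0]]
      have "(\<integral>x. (norm (response v k x))\<^sup>2 \<partial>M) \<le> c * (K * sqnorm v + sqnorm v)" .
      also have "\<dots> \<le> max K (c * (K + 1)) * sqnorm v"
        using mult_right_mono[OF max.cobounded2[of "c * (K + 1)" K] sqnorm_nonneg[of v]]
        by (simp add: algebra_simps)
      finally show ?thesis using \<open>N - i = k\<close> by simp
    qed
    with K0 show ?case by (intro exI[of _ "max K (c * (K + 1))"]) auto
  qed
  from this[of N] obtain K where K0: "K \<ge> 0" and K: "\<And>v i. predL2 M w N v \<Longrightarrow> i \<le> N \<Longrightarrow>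
      (\<integral>x. (norm (response v (N - i) x))\<^sup>2 \<partial>M) \<le> K * sqnorm v"
    by auto
  show ?thesis
  proof (intro exI[of _ K] conjI allI impI K0)
    fix v :: "nat \<Rightarrow> 'a \<Rightarrow> real^'m" and k assume "predL2 M w N v" "k \<le> N"
    then show "(\<integral>x. (norm (response v k x))\<^sup>2 \<partial>M) \<le> K * sqnorm v"
      using K[of v "N - k"] by simp
  qed
qed

subsection \<open>The adjoint equation\<close>

primrec adjoint_iter :: "('a \<Rightarrow> real^'n) \<Rightarrow> (nat \<Rightarrow> 'a \<Rightarrow> real^'n) \<Rightarrow> nat \<Rightarrow> 'a \<Rightarrow> real^'n" where
  "adjoint_iter x0 \<phi> 0 = x0"
| "adjoint_iter x0 \<phi> (Suc k) = (\<lambda>z. transpose (A k) *v adjoint_iter x0 \<phi> k z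
      + w k z *\<^sub>R (transpose (C k) *v adjoint_iter x0 \<phi> k z) + \<phi> k z)"

lemma sqint_adjoint_iter:
  assumes x0: "sqint M (F 0) x0" and \<phi>: "\<And>k. k < N \<Longrightarrow> sqint M (F (Suc k)) (\<phi> k)"
  shows "k \<le> N \<Longrightarrow> sqint M (F k) (adjoint_iter x0 \<phi> k)"
proof (induction k)
  case (Suc k)
  then have k: "k < N" and SkN: "Suc k \<le> N" by auto
  have X: "sqint M (F k) (adjoint_iter x0 \<phi> k)" using Suc by simp
  have "sqint M (F k) (\<lambda>z. transpose (A k) *v adjoint_iter x0 \<phi> k z)"
    using sqint_filt_matrix_vector[OF _ X] k by simp
  then have "sqint M (F (Suc k)) (\<lambda>z. transpose (A k) *v adjoint_iter x0 \<phi> k z)"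
    by (rule sqint_filt_mono[rotated]) simp
  moreover have "sqint M (F (Suc k)) (\<lambda>z. w k z *\<^sub>R (transpose (C k) *v adjoint_iter x0 \<phi> k z))"
    using sqint_noise_scaleR[OF k sqint_filt_matrix_vector[OF _ X]] k by simp
  ultimately show ?case
    using \<phi>[OF k] by (simp add: sqint_filt_add[OF SkN])
qed (use x0 in simp)

lemma adjoint_step_pairing:
  assumes y: "is_sol M w N A B C (\<lambda>k x. 0) (\<lambda>x. 0) v y" and v: "predL2 M w N v"
    and X: "sqint M (F k) X" and \<phi>: "sqint M (F (Suc k)) \<phi>" and k: "k < N"
  defines "X' \<equiv> \<lambda>z. transpose (A k) *v X z + w k z *\<^sub>R (transpose (C k) *v X z) + \<phi> z"
  shows "(\<integral>x. inner (X' x) (y (Suc k) x) \<partial>M) = (\<integral>x. inner (X x) (y k x) \<partial>M)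
      - (\<integral>x. inner (transpose (B k) *v X x) (v k x) \<partial>M) + (\<integral>x. inner (\<phi> x) (y (Suc k) x) \<partial>M)"
proof -
  let ?I = "\<lambda>P Q. \<integral>x. inner (P x) (Q x) \<partial>M"
  let ?Ey = "cexp M (F k) (y (Suc k))" and ?Ewy = "cexp M (F k) (\<lambda>z. w k z *\<^sub>R y (Suc k) z)"
  have kN: "k \<le> N" using k by simp
  have X2: "L2 M X" using sqint_filt_imp_L2[OF kN X] .
  have Ys: "L2 M (y (Suc k))" and yk: "L2 M (y k)" using is_sol_L2[OF y] k by auto
  have vk: "L2 M (v k)" using predL2_L2[OF v k] .
  have AX: "sqint M (F k) (\<lambda>z. transpose (A k) *v X z)"
    and CX: "sqint M (F k) (\<lambda>z. transpose (C k) *v X z)"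
    using sqint_filt_matrix_vector[OF kN X] by auto
  have AX2: "L2 M (\<lambda>z. transpose (A k) *v X z)" using sqint_filt_imp_L2[OF kN AX] .
  have WCX: "L2 M (\<lambda>z. w k z *\<^sub>R (transpose (C k) *v X z))" using L2_noise_scaleR[OF k CX] .
  have ph: "L2 M \<phi>" using sqint_filt_imp_L2[OF _ \<phi>] k by simp
  have a: "L2 M (\<lambda>x. A k *v ?Ey x)" using L2_matrix_vector[OF L2_cexp[OF kN Ys]] .
  have b: "L2 M (\<lambda>x. B k *v v k x)" using L2_matrix_vector[OF vk] .
  have c: "L2 M (\<lambda>x. C k *v ?Ewy x)"
    using L2_matrix_vector[OF sqint_filt_imp_L2[OF kN cexp_noise_L2_contraction(1)[OF k Ys]]] .
  have "?I X (y k) = ?I X (\<lambda>x. A k *v ?Ey x + B k *v v k x + C k *v ?Ewy x)"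
    by (rule integral_cong_AE)
      (use is_sol_step[OF y k] sqint_measurable[OF X2] sqint_measurable[OF yk]
        sqint_measurable[OF L2_add[OF L2_add[OF a b] c]] in \<open>auto simp: backward_step_def elim: AE_mp\<close>)
  also have "\<dots> = ?I X (\<lambda>x. A k *v ?Ey x) + ?I X (\<lambda>x. B k *v v k x) + ?I X (\<lambda>x. C k *v ?Ewy x)"
    using integral_inner_add_right[OF L2_add[OF a b] c X2] integral_inner_add_right[OF a b X2] by simp
  also have "?I X (\<lambda>x. A k *v ?Ey x) = ?I (\<lambda>z. transpose (A k) *v X z) (y (Suc k))"
    unfolding inner_transpose_matrix_vector using integral_inner_cexp[OF kN AX Ys] .
  also have "?I X (\<lambda>x. B k *v v k x) = ?I (\<lambda>x. transpose (B k) *v X x) (v k)"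
    unfolding inner_transpose_matrix_vector ..
  also have "?I X (\<lambda>x. C k *v ?Ewy x) = ?I (\<lambda>z. w k z *\<^sub>R (transpose (C k) *v X z)) (y (Suc k))"
    unfolding inner_transpose_matrix_vector using integral_inner_cexp_noise[OF k CX Ys] .
  finally have "?I X (y k) = ?I (\<lambda>z. transpose (A k) *v X z) (y (Suc k))
      + ?I (\<lambda>x. transpose (B k) *v X x) (v k) + ?I (\<lambda>z. w k z *\<^sub>R (transpose (C k) *v X z)) (y (Suc k))" .
  moreover have "?I X' (y (Suc k)) = ?I (\<lambda>z. transpose (A k) *v X z) (y (Suc k))
      + ?I (\<lambda>z. w k z *\<^sub>R (transpose (C k) *v X z)) (y (Suc k)) + ?I \<phi> (y (Suc k))"
    unfolding X'_def
    using integral_inner_add_left[OF L2_add[OF AX2 WCX] ph Ys] integral_inner_add_left[OF AX2 WCX Ys]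
    by simp
  ultimately show ?thesis by simp
qed

lemma duality:
  assumes y: "is_sol M w N A B C (\<lambda>k x. 0) (\<lambda>x. 0) v y" and v: "predL2 M w N v"
    and x0: "sqint M (F 0) x0" and \<phi>: "\<And>k. k < N \<Longrightarrow> sqint M (F (Suc k)) (\<phi> k)"
  shows "(\<integral>x. inner (x0 x) (y 0 x) \<partial>M) + (\<Sum>k<N. \<integral>x. inner (\<phi> k x) (y (Suc k) x) \<partial>M)
       = (\<Sum>k<N. \<integral>x. inner (transpose (B k) *v adjoint_iter x0 \<phi> k x) (v k x) \<partial>M)"
proof -
  let ?X = "adjoint_iter x0 \<phi>"
  let ?I = "\<lambda>P Q. \<integral>x. inner (P x) (Q x) \<partial>M"
  have tel: "m \<le> N \<Longrightarrow> ?I (?X m) (y m) = ?I x0 (y 0)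
      - (\<Sum>k<m. ?I (\<lambda>x. transpose (B k) *v ?X k x) (v k)) + (\<Sum>k<m. ?I (\<phi> k) (y (Suc k)))" for m
  proof (induction m)
    case (Suc m)
    then show ?case
      using adjoint_step_pairing[OF y v sqint_adjoint_iter[OF x0 \<phi>] \<phi>, of m] by simp
  qed simp
  have "AE x in M. y N x = 0" using y by (simp add: is_sol_def)
  then have "AE x in M. inner (?X N x) (y N x) = 0" by eventually_elim simp
  then have "?I (?X N) (y N) = 0" by (rule integral_eq_zero_AE)
  then show ?thesis using tel[of N] by simp
qed

end

lemma hadjI:
  assumes "z \<in> D" "\<forall>v\<in>D. ipD z v = ipC x (T v)"
  shows "hadj D ipD ipC T x \<in> D \<and> (\<forall>v\<in>D. ipD (hadj D ipD ipC T x) v = ipC x (T v))"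
  unfolding hadj_def by (rule someI[where P="\<lambda>z. z \<in> D \<and> (\<forall>v\<in>D. ipD z v = ipC x (T v))"])
    (use assms in blast)

context noise_filtration
begin

lemma ipp_linear_right:
  fixes g v v' :: "nat \<Rightarrow> 'a \<Rightarrow> real^'d"
  assumes g: "\<And>k. k < N \<Longrightarrow> L2 M (g k)" and v: "predL2 M w N v" and v': "predL2 M w N v'"
  shows "ipp M N g (\<lambda>k x. a *\<^sub>R v k x + b *\<^sub>R v' k x) = a * ipp M N g v + b * ipp M N g v'"
proof -
  note vL = predL2_L2[OF v] and vL' = predL2_L2[OF v']
  have "ipp M N g (\<lambda>k x. a *\<^sub>R v k x + b *\<^sub>R v' k x)
      = (\<Sum>k<N. \<integral>x. inner (g k x) (a *\<^sub>R v k x + b *\<^sub>R v' k x) \<partial>M)"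
    by (rule ipp_eq_sum) (use g vL vL' in \<open>auto intro!: L2_add sqint_scaleR\<close>)
  also have "\<dots> = (\<Sum>k<N. a * (\<integral>x. inner (g k x) (v k x) \<partial>M) + b * (\<integral>x. inner (g k x) (v' k x) \<partial>M))"
    using L2_integrable_inner[OF g vL] L2_integrable_inner[OF g vL']
    by (intro sum.cong) (auto simp: inner_add_right)
  also have "\<dots> = a * ipp M N g v + b * ipp M N g v'"
    using ipp_eq_sum[OF g vL] ipp_eq_sum[OF g vL'] by (simp add: sum.distrib sum_distrib_left)
  finally show ?thesis .
qed

lemma abs_ipp_le_weighted:
  fixes g v :: "nat \<Rightarrow> 'a \<Rightarrow> real^'d"
  assumes g: "\<And>k. k < N \<Longrightarrow> L2 M (g k)" and v: "\<And>k. k < N \<Longrightarrow> L2 M (v k)" and t: "0 < t"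
  shows "\<bar>ipp M N g v\<bar> \<le> t / 2 * sqnorm g + sqnorm v / (2 * t)"
proof -
  have "ipp M N g v = (\<Sum>k<N. \<integral>x. inner (g k x) (v k x) \<partial>M)"
    by (rule ipp_eq_sum) (use g v in auto)
  then have "\<bar>ipp M N g v\<bar> \<le> (\<Sum>k<N. \<bar>\<integral>x. inner (g k x) (v k x) \<partial>M\<bar>)"
    by (simp add: sum_abs)
  also have "\<dots> \<le> (\<Sum>k<N. t / 2 * (\<integral>x. (norm (g k x))\<^sup>2 \<partial>M) + (\<integral>x. (norm (v k x))\<^sup>2 \<partial>M) / (2 * t))"
  proof (rule sum_mono)
    fix k assume "k \<in> {..<N}"
    then have gk: "L2 M (g k)" and vk: "L2 M (v k)" using g v by auto
    have "\<bar>\<integral>x. inner (g k x) (v k x) \<partial>M\<bar> \<le> (\<integral>x. \<bar>inner (g k x) (v k x)\<bar> \<partial>M)"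
      by (rule integral_abs_bound)
    also have "\<dots> \<le> (\<integral>x. t / 2 * (norm (g k x))\<^sup>2 + (norm (v k x))\<^sup>2 / (2 * t) \<partial>M)"
      by (rule integral_mono)
        (use L2_integrable_inner[OF gk vk] gk vk abs_inner_le_weighted_squares[OF t]
          in \<open>auto simp: sqint_def\<close>)
    also have "\<dots> = t / 2 * (\<integral>x. (norm (g k x))\<^sup>2 \<partial>M) + (\<integral>x. (norm (v k x))\<^sup>2 \<partial>M) / (2 * t)"
      using gk vk by (simp add: sqint_def)
    finally show "\<bar>\<integral>x. inner (g k x) (v k x) \<partial>M\<bar>
        \<le> t / 2 * (\<integral>x. (norm (g k x))\<^sup>2 \<partial>M) + (\<integral>x. (norm (v k x))\<^sup>2 \<partial>M) / (2 * t)" .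
  qed
  also have "\<dots> = t / 2 * sqnorm g + sqnorm v / (2 * t)"
    unfolding sqnorm_def by (simp add: sum.distrib sum_distrib_left sum_divide_distrib)
  finally show ?thesis .
qed

lemma frechet_at_of_quadratic_remainder:
  fixes g :: "nat \<Rightarrow> 'a \<Rightarrow> real^'m" and J :: "(nat \<Rightarrow> 'a \<Rightarrow> real^'m) \<Rightarrow> real"
  assumes g: "\<And>k. k < N \<Longrightarrow> L2 M (g k)" and K0: "0 \<le> K"
    and rem: "\<And>v. predL2 M w N v \<Longrightarrow> \<bar>J (\<lambda>k x. u k x + v k x) - J u - ipp M N g v\<bar> \<le> K * ipp M N v v"
  shows "frechet_at {h. predL2 M w N h} (\<lambda>v. sqrt (ipp M N v v)) J u (\<lambda>v. ipp M N g v)"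
  unfolding frechet_at_def
proof (intro conjI)
  show "\<forall>v\<in>{h. predL2 M w N h}. \<forall>v'\<in>{h. predL2 M w N h}. \<forall>a b.
      ipp M N g (\<lambda>k x. a *\<^sub>R v k x + b *\<^sub>R v' k x) = a * ipp M N g v + b * ipp M N g v'"
    using ipp_linear_right[of g, OF g] by blast
  have "\<bar>ipp M N g v\<bar> \<le> (sqnorm g + 1) / 2 * sqrt (ipp M N v v)" if v: "predL2 M w N v" for v
    by (rule le_sqrt_bound_of_weighted[OF sqnorm_nonneg ipp_self_nonneg])
      (use abs_ipp_le_weighted[of g v, OF g predL2_L2[OF v]] ipp_self_eq_sqnorm[OF v] in simp)
  then show "\<exists>K. \<forall>v\<in>{h. predL2 M w N h}. \<bar>ipp M N g v\<bar> \<le> K * sqrt (ipp M N v v)"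
    by blast
  show "\<forall>e>0. \<exists>d>0. \<forall>v\<in>{h. predL2 M w N h}. sqrt (ipp M N v v) < d \<longrightarrow>
      \<bar>J (\<lambda>k x. u k x + v k x) - J u - ipp M N g v\<bar> \<le> e * sqrt (ipp M N v v)"
  proof (intro allI impI)
    fix e :: real assume e: "0 < e"
    have "\<bar>J (\<lambda>k x. u k x + v k x) - J u - ipp M N g v\<bar> \<le> e * sqrt (ipp M N v v)"
      if v: "predL2 M w N v" and small: "sqrt (ipp M N v v) < e / (K + 1)" for v
    proof -
      define s where "s = sqrt (ipp M N v v)"
      have s0: "0 \<le> s" and ss: "ipp M N v v = s * s"
        unfolding s_def using ipp_self_nonneg[of v] by auto
      have "\<bar>J (\<lambda>k x. u k x + v k x) - J u - ipp M N g v\<bar> \<le> K * (s * s)"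
        using rem[OF v] ss by simp
      also have "\<dots> \<le> K * (e / (K + 1) * s)"
        using small s0 K0 unfolding s_def[symmetric] by (intro mult_left_mono mult_right_mono) auto
      also have "\<dots> \<le> e * s"
        using mult_right_mono[of "K * (e / (K + 1))" e s] K0 e s0 by (simp add: field_simps)
      finally show ?thesis unfolding s_def .
    qed
    moreover have "0 < e / (K + 1)" using e K0 by simp
    ultimately show "\<exists>d>0. \<forall>v\<in>{h. predL2 M w N h}. sqrt (ipp M N v v) < d \<longrightarrow>
        \<bar>J (\<lambda>k x. u k x + v k x) - J u - ipp M N g v\<bar> \<le> e * sqrt (ipp M N v v)"
      by blast
  qed
qed

end

context state_equation
begin

abbreviation controls :: "(nat \<Rightarrow> 'a \<Rightarrow> real^'m) set" where
  "controls \<equiv> {h. predL2 M w N h}"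

abbreviation L0_adj :: "('a \<Rightarrow> real^'n) \<Rightarrow> nat \<Rightarrow> 'a \<Rightarrow> real^'m" where
  "L0_adj \<equiv> hadj controls (ipp M N) (ipx M) (\<lambda>v. response v 0)"

abbreviation L1_adj :: "(nat \<Rightarrow> 'a \<Rightarrow> real^'n) \<Rightarrow> nat \<Rightarrow> 'a \<Rightarrow> real^'m" where
  "L1_adj \<equiv> hadj controls (ipp M N) (ipp M N) (\<lambda>v k. response v (Suc k))"

abbreviation Phi_adj :: "(nat \<Rightarrow> 'a \<Rightarrow> real^'n) \<Rightarrow> nat \<Rightarrow> 'a \<Rightarrow> real^'n" where
  "Phi_adj \<equiv> hadj {h. adaptL2 M w N h} (ipp M N) (ipp M N) (\<lambda>\<phi> k. cexp M (F k) (\<phi> k))"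

lemma predL2_transpose_B_adjoint_iter:
  assumes x0: "sqint M (F 0) x0" and \<phi>: "\<And>k. k < N \<Longrightarrow> sqint M (F (Suc k)) (\<phi> k)"
  shows "predL2 M w N (\<lambda>k x. transpose (B k) *v adjoint_iter x0 \<phi> k x)"
  unfolding predL2_def using sqint_adjoint_iter[OF x0 \<phi>] by (auto intro: sqint_filt_matrix_vector)

lemma L1_adj:
  assumes \<phi>: "adaptL2 M w N \<phi>"
  shows "predL2 M w N (L1_adj \<phi>) \<and>
    (\<forall>v. predL2 M w N v \<longrightarrow> ipp M N (L1_adj \<phi>) v = ipp M N \<phi> (\<lambda>k. response v (Suc k)))"
proof -
  have \<phi>k: "\<And>k. k < N \<Longrightarrow> sqint M (F (Suc k)) (\<phi> k)" using \<phi> by (simp add: adaptL2_def)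
  define z where "z = (\<lambda>k x. transpose (B k) *v adjoint_iter (\<lambda>x. 0) \<phi> k x)"
  have z: "predL2 M w N z" unfolding z_def by (rule predL2_transpose_B_adjoint_iter[OF sqint_zero \<phi>k])
  have "ipp M N z v = ipp M N \<phi> (\<lambda>k. response v (Suc k))" if v: "predL2 M w N v" for v
  proof -
    note y = is_sol_response[OF v]
    have "ipp M N z v = (\<Sum>k<N. \<integral>x. inner (z k x) (v k x) \<partial>M)"
      by (rule ipp_eq_sum) (use predL2_L2[OF z] predL2_L2[OF v] in auto)
    also have "\<dots> = (\<Sum>k<N. \<integral>x. inner (\<phi> k x) (response v (Suc k) x) \<partial>M)"
      using duality[OF y v sqint_zero \<phi>k] by (simp add: z_def)
    also have "\<dots> = ipp M N \<phi> (\<lambda>k. response v (Suc k))"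
      by (rule ipp_eq_sum[symmetric]) (use adaptL2_L2[OF \<phi>] is_sol_L2[OF y] in auto)
    finally show ?thesis .
  qed
  then show ?thesis
    using hadjI[where D=controls and ipD="ipp M N" and ipC="ipp M N" and x=\<phi>
        and T="\<lambda>v k. response v (Suc k)"] z by auto
qed

lemma L0_adj:
  assumes N0: "0 < N" and X: "L2 M X"
  shows "predL2 M w N (L0_adj X) \<and>
    (\<forall>v. predL2 M w N v \<longrightarrow> ipp M N (L0_adj X) v = ipx M X (response v 0))"
proof -
  define x0 where "x0 = cexp M (F 0) X"
  have x0: "sqint M (F 0) x0" unfolding x0_def using cexp_L2_contraction(1)[OF _ X] by simp
  have \<phi>: "\<And>k. k < N \<Longrightarrow> sqint M (F (Suc k)) ((\<lambda>k x. 0::real^'n) k)" by (simp add: sqint_zero)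
  define z where "z = (\<lambda>k x. transpose (B k) *v adjoint_iter x0 (\<lambda>k x. 0) k x)"
  have z: "predL2 M w N z" unfolding z_def by (rule predL2_transpose_B_adjoint_iter[OF x0 \<phi>])
  have "ipp M N z v = ipx M X (response v 0)" if v: "predL2 M w N v" for v
  proof -
    note y = is_sol_response[OF v]
    have "ipp M N z v = (\<Sum>k<N. \<integral>x. inner (z k x) (v k x) \<partial>M)"
      by (rule ipp_eq_sum) (use predL2_L2[OF z] predL2_L2[OF v] in auto)
    also have "\<dots> = (\<integral>x. inner (x0 x) (response v 0 x) \<partial>M)"
      using duality[OF y v x0 \<phi>] by (simp add: z_def)
    also have "\<dots> = (\<integral>x. inner (response v 0 x) (X x) \<partial>M)"
      using integral_inner_cexp[OF _ is_sol_predictable[OF y v predL2_zero N0] X]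
      by (simp add: x0_def inner_commute)
    finally show ?thesis by (simp add: ipx_def inner_commute)
  qed
  then show ?thesis
    using hadjI[where D=controls and ipD="ipp M N" and ipC="ipx M" and x=X
        and T="\<lambda>v. response v 0"] z by auto
qed

lemma Phi_adj:
  assumes X: "predL2 M w N X"
  shows "adaptL2 M w N (Phi_adj X) \<and>
    (\<forall>\<phi>. adaptL2 M w N \<phi> \<longrightarrow> ipp M N (Phi_adj X) \<phi> = ipp M N X (\<lambda>k. cexp M (F k) (\<phi> k)))"
proof -
  have "ipp M N X \<phi> = ipp M N X (\<lambda>k. cexp M (F k) (\<phi> k))" if \<phi>: "adaptL2 M w N \<phi>" for \<phi>
  proof -
    have \<phi>L: "k < N \<Longrightarrow> L2 M (\<phi> k)" for k using adaptL2_L2[OF \<phi>] .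
    have "ipp M N X \<phi> = (\<Sum>k<N. \<integral>z. inner (X k z) (\<phi> k z) \<partial>M)"
      by (rule ipp_eq_sum) (use predL2_L2[OF X] \<phi>L in auto)
    also have "\<dots> = (\<Sum>k<N. \<integral>z. inner (X k z) (cexp M (F k) (\<phi> k) z) \<partial>M)"
      using integral_inner_cexp[OF _ _ \<phi>L] X by (simp add: predL2_def)
    also have "\<dots> = ipp M N X (\<lambda>k. cexp M (F k) (\<phi> k))"
      by (rule ipp_eq_sum[symmetric]) (use predL2_L2[OF X] \<phi>L in \<open>auto intro: L2_cexp\<close>)
    finally show ?thesis .
  qed
  then show ?thesis
    using hadjI[where D="{h. adaptL2 M w N h}" and ipD="ipp M N" and ipC="ipp M N" and x=X
        and T="\<lambda>\<phi> k. cexp M (F k) (\<phi> k)"] predL2_imp_adaptL2[OF X] by auto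
qed

lemma L1_Phi_adj:
  assumes X: "predL2 M w N X"
  shows "predL2 M w N (L1_adj (Phi_adj X)) \<and> (\<forall>v. predL2 M w N v \<longrightarrow>
    ipp M N (L1_adj (Phi_adj X)) v = (\<Sum>k<N. \<integral>x. inner (X k x) (cexp M (F k) (response v (Suc k)) x) \<partial>M))"
proof -
  have "adaptL2 M w N (\<lambda>k. response v (Suc k))" if v: "predL2 M w N v" for v
    unfolding adaptL2_def using is_sol_next_adapted[OF is_sol_response[OF v] v predL2_zero] by blast
  moreover have "ipp M N X (\<lambda>k. cexp M (F k) (response v (Suc k)))
      = (\<Sum>k<N. \<integral>x. inner (X k x) (cexp M (F k) (response v (Suc k)) x) \<partial>M)"
    if v: "predL2 M w N v" for v
    by (rule ipp_eq_sum)
      (use predL2_L2[OF X] is_sol_L2[OF is_sol_response[OF v]] in \<open>auto intro!: L2_cexp\<close>)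
  ultimately show ?thesis using Phi_adj[OF X] L1_adj[of "Phi_adj X"] by auto
qed

end

subsection \<open>The cost functional\<close>

lemma quadratic_form_expansion:
  assumes "transpose G = (G::real^'n^'n)"
  shows "inner (G *v (y + d)) (y + d) = inner (G *v y) y + 2 * inner (G *v y) d + inner (G *v d) d"
  using inner_symmetric_matrix_vector[OF assms, of d y]
  by (simp add: matrix_vector_right_distrib inner_add_left inner_add_right)

lemma stage_cost_expansion:
  fixes Q :: "real^'n^'n" and R :: "real^'m^'m" and S :: "real^'n^'m"
  assumes Q: "transpose Q = Q" and R: "transpose R = R"
  shows "inner (Q *v (yb + db)) (yb + db) + 2 * inner (S *v (yb + db)) (u + v)
      + inner (R *v (u + v)) (u + v) + 2 * inner e (yb + db) + 2 * inner r (u + v)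
   = (inner (Q *v yb) yb + 2 * inner (S *v yb) u + inner (R *v u) u + 2 * inner e yb + 2 * inner r u)
     + 2 * (inner (Q *v yb) db + inner (S *v yb) v + inner (transpose S *v u) db
       + inner (R *v u) v + inner e db + inner r v)
     + (inner (Q *v db) db + 2 * inner (S *v db) v + inner (R *v v) v)"
  using inner_symmetric_matrix_vector[OF Q, of db yb] inner_symmetric_matrix_vector[OF R, of v u]
    inner_matrix_vector_transpose[of S db u]
  by (simp add: matrix_vector_right_distrib inner_add_left inner_add_right inner_commute algebra_simps)

locale lq_problem = state_equation M w N A C B
  for M :: "'a measure" and w :: "nat \<Rightarrow> 'a \<Rightarrow> real" and N :: nat
    and A C :: "nat \<Rightarrow> real^'n^'n" and B :: "nat \<Rightarrow> real^'m^'n" +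
  fixes q eta :: "nat \<Rightarrow> 'a \<Rightarrow> real^'n" and rho :: "nat \<Rightarrow> 'a \<Rightarrow> real^'m"
    and G0 :: "real^'n^'n" and Q :: "nat \<Rightarrow> real^'n^'n" and S :: "nat \<Rightarrow> real^'n^'m"
    and R :: "nat \<Rightarrow> real^'m^'m"
  assumes q: "predL2 M w N q" and eta: "predL2 M w N eta" and rho: "predL2 M w N rho"
    and G0_symmetric: "transpose G0 = G0"
    and Q_symmetric: "\<And>k. k < N \<Longrightarrow> transpose (Q k) = Q k"
    and R_symmetric: "\<And>k. k < N \<Longrightarrow> transpose (R k) = R k"
begin

abbreviation ybar :: "(nat \<Rightarrow> 'a \<Rightarrow> real^'n) \<Rightarrow> nat \<Rightarrow> 'a \<Rightarrow> real^'n" where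
  "ybar y k \<equiv> cexp M (F k) (y (Suc k))"

definition cost_integrand :: "(nat \<Rightarrow> 'a \<Rightarrow> real^'n) \<Rightarrow> (nat \<Rightarrow> 'a \<Rightarrow> real^'m) \<Rightarrow> 'a \<Rightarrow> real" where
  "cost_integrand y u x = inner (G0 *v y 0 x) (y 0 x)
    + (\<Sum>k<N. inner (Q k *v ybar y k x) (ybar y k x) + 2 * inner (S k *v ybar y k x) (u k x)
        + inner (R k *v u k x) (u k x) + 2 * inner (eta k x) (ybar y k x) + 2 * inner (rho k x) (u k x))"

definition first_variation ::
    "(nat \<Rightarrow> 'a \<Rightarrow> real^'n) \<Rightarrow> (nat \<Rightarrow> 'a \<Rightarrow> real^'m) \<Rightarrow> (nat \<Rightarrow> 'a \<Rightarrow> real^'n) \<Rightarrow> (nat \<Rightarrow> 'a \<Rightarrow> real^'m) \<Rightarrow> 'a \<Rightarrow> real" where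
  "first_variation y u d v x = inner (G0 *v y 0 x) (d 0 x)
    + (\<Sum>k<N. inner (Q k *v ybar y k x) (ybar d k x) + inner (S k *v ybar y k x) (v k x)
        + inner (transpose (S k) *v u k x) (ybar d k x) + inner (R k *v u k x) (v k x)
        + inner (eta k x) (ybar d k x) + inner (rho k x) (v k x))"

definition second_variation :: "(nat \<Rightarrow> 'a \<Rightarrow> real^'n) \<Rightarrow> (nat \<Rightarrow> 'a \<Rightarrow> real^'m) \<Rightarrow> 'a \<Rightarrow> real" where
  "second_variation d v x = inner (G0 *v d 0 x) (d 0 x)
    + (\<Sum>k<N. inner (Q k *v ybar d k x) (ybar d k x) + 2 * inner (S k *v ybar d k x) (v k x)
        + inner (R k *v v k x) (v k x))"

lemma cost_eq_integral:
  "cost M w N A B C q G0 Q S R eta rho xi u = 1/2 * integral\<^sup>L M (cost_integrand (sol M w N A B C q xi u) u)"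
  unfolding cost_def Let_def cost_integrand_def by simp

lemma cost_integrand_add:
  assumes y0: "y' 0 x = y 0 x + d 0 x" and yk: "\<forall>k<N. ybar y' k x = ybar y k x + ybar d k x"
  shows "cost_integrand y' (\<lambda>k x. u k x + v k x) x
    = cost_integrand y u x + 2 * first_variation y u d v x + second_variation d v x"
proof -
  have "(\<Sum>k<N. inner (Q k *v ybar y' k x) (ybar y' k x)
      + 2 * inner (S k *v ybar y' k x) (u k x + v k x) + inner (R k *v (u k x + v k x)) (u k x + v k x)
      + 2 * inner (eta k x) (ybar y' k x) + 2 * inner (rho k x) (u k x + v k x))
    = (\<Sum>k<N. (inner (Q k *v ybar y k x) (ybar y k x) + 2 * inner (S k *v ybar y k x) (u k x)
        + inner (R k *v u k x) (u k x) + 2 * inner (eta k x) (ybar y k x) + 2 * inner (rho k x) (u k x))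
      + 2 * (inner (Q k *v ybar y k x) (ybar d k x) + inner (S k *v ybar y k x) (v k x)
        + inner (transpose (S k) *v u k x) (ybar d k x) + inner (R k *v u k x) (v k x)
        + inner (eta k x) (ybar d k x) + inner (rho k x) (v k x))
      + (inner (Q k *v ybar d k x) (ybar d k x) + 2 * inner (S k *v ybar d k x) (v k x)
        + inner (R k *v v k x) (v k x)))"
    using yk stage_cost_expansion[OF Q_symmetric R_symmetric] by (intro sum.cong) auto
  then show ?thesis
    unfolding cost_integrand_def first_variation_def second_variation_def
    using y0 quadratic_form_expansion[OF G0_symmetric, of "y 0 x" "d 0 x"]
    by (simp add: sum.distrib sum_distrib_left algebra_simps)
qed

lemma integrable_cost_integrand:
  assumes "\<And>k. k \<le> N \<Longrightarrow> L2 M (y k)" "\<And>k. k < N \<Longrightarrow> L2 M (u k)"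
  shows "integrable M (cost_integrand y u)"
  unfolding cost_integrand_def using assms predL2_L2[OF eta] predL2_L2[OF rho]
  by (auto intro!: Bochner_Integration.integrable_add integrable_sum integrable_mult_right
      L2_integrable_inner L2_matrix_vector L2_cexp)

lemma integrable_first_variation:
  assumes "\<And>k. k \<le> N \<Longrightarrow> L2 M (y k)" "\<And>k. k < N \<Longrightarrow> L2 M (u k)"
    "\<And>k. k \<le> N \<Longrightarrow> L2 M (d k)" "\<And>k. k < N \<Longrightarrow> L2 M (v k)"
  shows "integrable M (first_variation y u d v)"
  unfolding first_variation_def using assms predL2_L2[OF eta] predL2_L2[OF rho]
  by (auto intro!: Bochner_Integration.integrable_add integrable_sum
      L2_integrable_inner L2_matrix_vector L2_cexp)

lemma integrable_second_variation:
  assumes "\<And>k. k \<le> N \<Longrightarrow> L2 M (d k)" "\<And>k. k < N \<Longrightarrow> L2 M (v k)"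
  shows "integrable M (second_variation d v)"
  unfolding second_variation_def using assms
  by (auto intro!: Bochner_Integration.integrable_add integrable_sum integrable_mult_right
      L2_integrable_inner L2_matrix_vector L2_cexp)

lemma ybar_AE_add:
  assumes y: "\<And>k. k \<le> N \<Longrightarrow> AE x in M. y' k x = y k x + d k x"
    and L: "\<And>k. k \<le> N \<Longrightarrow> L2 M (y' k)" "\<And>k. k \<le> N \<Longrightarrow> L2 M (y k)" "\<And>k. k \<le> N \<Longrightarrow> L2 M (d k)"
  shows "AE x in M. \<forall>k<N. ybar y' k x = ybar y k x + ybar d k x"
proof -
  have "AE x in M. \<forall>k\<in>{..<N}. ybar y' k x = ybar y k x + ybar d k x"
  proof (rule AE_finite_allI[OF finite_lessThan])
    fix k assume "k \<in> {..<N}"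
    then have k: "k < N" by simp
    have kN: "k \<le> N" "Suc k \<le> N" using k by auto
    have "AE x in M. ybar y' k x = cexp M (F k) (\<lambda>x. y (Suc k) x + d (Suc k) x) x"
      by (rule cexp_AE_cong[OF kN(1) y[OF kN(2)]])
        (use sqint_measurable[OF L(1)[OF kN(2)]] sqint_measurable[OF L2_add[OF L(2,3)[OF kN(2)]]] in auto)
    with cexp_add_L2[OF kN(1) L(2,3)[OF kN(2)]]
    show "AE x in M. ybar y' k x = ybar y k x + ybar d k x" by eventually_elim simp
  qed
  then show ?thesis by (simp add: Ball_def)
qed

lemma cost_increment:
  assumes xi: "sqint M (F N) xi" and u: "predL2 M w N u" and v: "predL2 M w N v"
  defines "y \<equiv> sol M w N A B C q xi u"
  shows "cost M w N A B C q G0 Q S R eta rho xi (\<lambda>k x. u k x + v k x) - cost M w N A B C q G0 Q S R eta rho xi u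
     = integral\<^sup>L M (first_variation y u (response v) v) + 1/2 * integral\<^sup>L M (second_variation (response v) v)"
proof -
  define d where "d = response v"
  define uv where "uv = (\<lambda>k x. u k x + v k x)"
  have uv: "predL2 M w N uv"
    unfolding uv_def predL2_def using u v by (auto simp: predL2_def intro: sqint_filt_add)
  define y' where "y' = sol M w N A B C q xi uv"
  have yS: "is_sol M w N A B C q xi u y" unfolding y_def by (rule is_sol_sol[OF u q xi])
  have dS: "is_sol M w N A B C (\<lambda>k x. 0) (\<lambda>x. 0) v d" unfolding d_def by (rule is_sol_response[OF v])
  have y'S: "is_sol M w N A B C q xi uv y'" unfolding y'_def by (rule is_sol_sol[OF uv q xi])
  have L: "k \<le> N \<Longrightarrow> L2 M (y' k)" "k \<le> N \<Longrightarrow> L2 M (y k)" "k \<le> N \<Longrightarrow> L2 M (d k)" for k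
    using is_sol_L2[OF y'S] is_sol_L2[OF yS] is_sol_L2[OF dS] by auto
  have lin: "k \<le> N \<Longrightarrow> AE x in M. y' k x = y k x + d k x" for k
    by (rule is_sol_superposition[OF yS dS y'S]) (auto simp: uv_def)
  have "AE x in M. \<forall>k<N. ybar y' k x = ybar y k x + ybar d k x"
    by (rule ybar_AE_add) (use lin L in blast)+
  then have "AE x in M. cost_integrand y' uv x = cost_integrand y u x + 2 * first_variation y u d v x
      + second_variation d v x"
    using lin[OF le0]
    by eventually_elim (simp add: uv_def cost_integrand_add)
  then have "integral\<^sup>L M (cost_integrand y' uv) = (\<integral>x. cost_integrand y u x
      + 2 * first_variation y u d v x + second_variation d v x \<partial>M)"
    by (intro integral_cong_AE borel_measurable_integrable)
      (use L predL2_L2[OF u] predL2_L2[OF v] predL2_L2[OF uv] in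
        \<open>auto intro!: Bochner_Integration.integrable_add integrable_mult_right
          integrable_cost_integrand integrable_first_variation integrable_second_variation\<close>)
  also have "\<dots> = integral\<^sup>L M (cost_integrand y u) + 2 * integral\<^sup>L M (first_variation y u d v)
      + integral\<^sup>L M (second_variation d v)"
    using L predL2_L2[OF u] predL2_L2[OF v]
    by (simp add: integrable_cost_integrand integrable_first_variation integrable_second_variation)
  finally show ?thesis
    unfolding cost_eq_integral y'_def y_def d_def uv_def by (simp add: algebra_simps)
qed

lemma abs_second_variation_le:
  "\<exists>c\<ge>0. \<forall>d v x. \<bar>second_variation d v x\<bar>
      \<le> c * ((norm (d 0 x))\<^sup>2 + (\<Sum>k<N. (norm (ybar d k x))\<^sup>2 + (norm (v k x))\<^sup>2))"
proof -
  obtain cG where cG: "cG \<ge> 0" "\<forall>x. (norm (G0 *v x))\<^sup>2 \<le> cG * (norm x)\<^sup>2"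
    using matrix_vector_mult_power2_bound by blast
  obtain cQ where cQ: "cQ \<ge> 0" "\<And>k. k < N \<Longrightarrow> \<forall>x. (norm (Q k *v x))\<^sup>2 \<le> cQ * (norm x)\<^sup>2"
    using matrix_family_power2_bound by blast
  obtain cS where cS: "cS \<ge> 0" "\<And>k. k < N \<Longrightarrow> \<forall>x. (norm (S k *v x))\<^sup>2 \<le> cS * (norm x)\<^sup>2"
    using matrix_family_power2_bound by blast
  obtain cR where cR: "cR \<ge> 0" "\<And>k. k < N \<Longrightarrow> \<forall>x. (norm (R k *v x))\<^sup>2 \<le> cR * (norm x)\<^sup>2"
    using matrix_family_power2_bound by blast
  define K where "K = cG + cQ + cS + cR"
  have K: "0 \<le> K" "cG \<le> K" "cQ \<le> K" "cS \<le> K" "cR \<le> K"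
    using cG(1) cQ(1) cS(1) cR(1) by (auto simp: K_def)
  define P where "P = (K + 1) / 2"
  note bound = abs_inner_matrix_vector_le_uniform[where K=K, folded P_def]
  have "\<bar>second_variation d v x\<bar> \<le> 4 * P * ((norm (d 0 x))\<^sup>2 + (\<Sum>k<N. (norm (ybar d k x))\<^sup>2 + (norm (v k x))\<^sup>2))"
    for d v x
  proof -
    let ?n = "(norm (d 0 x))\<^sup>2" and ?a = "\<lambda>k. (norm (ybar d k x))\<^sup>2" and ?b = "\<lambda>k. (norm (v k x))\<^sup>2"
    have "\<bar>inner (G0 *v d 0 x) (d 0 x)\<bar> \<le> P * (?n + ?n)"
      by (rule bound[OF cG(2) K(2,1)])
    also have "\<dots> \<le> 4 * P * ?n" using K(1) by (simp add: P_def field_simps)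
    finally have G: "\<bar>inner (G0 *v d 0 x) (d 0 x)\<bar> \<le> 4 * P * ?n" .
    have abs3: "\<bar>r1 + 2 * r2 + r3\<bar> \<le> P * (a + a) + 2 * (P * (a + b)) + P * (b + b)"
      if "\<bar>r1\<bar> \<le> P * (a + a)" "\<bar>r2\<bar> \<le> P * (a + b)" "\<bar>r3\<bar> \<le> P * (b + b)"
      for r1 r2 r3 a b :: real
      using that by linarith
    have "\<bar>inner (Q k *v ybar d k x) (ybar d k x) + 2 * inner (S k *v ybar d k x) (v k x)
        + inner (R k *v v k x) (v k x)\<bar> \<le> 4 * P * (?a k + ?b k)" if k: "k < N" for k
    proof -
      have "\<bar>inner (Q k *v ybar d k x) (ybar d k x) + 2 * inner (S k *v ybar d k x) (v k x)
          + inner (R k *v v k x) (v k x)\<bar> \<le> P * (?a k + ?a k) + 2 * (P * (?a k + ?b k)) + P * (?b k + ?b k)"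
        by (rule abs3 bound[OF cQ(2)[OF k] K(3,1)] bound[OF cS(2)[OF k] K(4,1)]
            bound[OF cR(2)[OF k] K(5,1)])+
      also have "\<dots> = 4 * P * (?a k + ?b k)" by (simp add: algebra_simps)
      finally show ?thesis .
    qed
    then have "\<bar>\<Sum>k<N. inner (Q k *v ybar d k x) (ybar d k x) + 2 * inner (S k *v ybar d k x) (v k x)
        + inner (R k *v v k x) (v k x)\<bar> \<le> (\<Sum>k<N. 4 * P * (?a k + ?b k))"
      by (intro order_trans[OF sum_abs] sum_mono) auto
    with G have "\<bar>second_variation d v x\<bar> \<le> 4 * P * ?n + (\<Sum>k<N. 4 * P * (?a k + ?b k))"
      unfolding second_variation_def by (rule abs_triangle_ineq[THEN order_trans, OF add_mono])
    then show ?thesis by (simp add: sum_distrib_left distrib_left)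
  qed
  moreover have "0 \<le> 4 * P" using K(1) by (simp add: P_def)
  ultimately show ?thesis by blast
qed

lemma second_variation_bound:
  "\<exists>K\<ge>0. \<forall>v. predL2 M w N v \<longrightarrow> \<bar>integral\<^sup>L M (second_variation (response v) v)\<bar> \<le> K * sqnorm v"
proof -
  obtain c where c0: "c \<ge> 0" and c: "\<And>d v x. \<bar>second_variation d v x\<bar>
      \<le> c * ((norm (d 0 x))\<^sup>2 + (\<Sum>k<N. (norm (ybar d k x))\<^sup>2 + (norm (v k x))\<^sup>2))"
    using abs_second_variation_le by blast
  obtain Kd where Kd0: "Kd \<ge> 0" and Kd: "\<And>v k. predL2 M w N v \<Longrightarrow> k \<le> N \<Longrightarrow>
      (\<integral>x. (norm (response v k x))\<^sup>2 \<partial>M) \<le> Kd * sqnorm v"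
    using response_bound by blast
  have "\<bar>integral\<^sup>L M (second_variation (response v) v)\<bar> \<le> c * ((N + 1) * Kd + 1) * sqnorm v"
    if v: "predL2 M w N v" for v
  proof -
    define d where "d = response v"
    let ?I = "\<lambda>X. \<integral>x. (norm (X x))\<^sup>2 \<partial>M"
    have Ld: "k \<le> N \<Longrightarrow> L2 M (d k)" for k unfolding d_def by (rule is_sol_L2[OF is_sol_response[OF v]])
    have Ldb: "k < N \<Longrightarrow> L2 M (ybar d k)" for k using Ld by (simp add: L2_cexp)
    have Lv: "k < N \<Longrightarrow> L2 M (v k)" for k using predL2_L2[OF v] .
    have db: "?I (ybar d k) \<le> Kd * sqnorm v" if k: "k < N" for k
      using cexp_L2_contraction(2)[of k "d (Suc k)"] Kd[OF v, of "Suc k"] Ld[of "Suc k"] k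
      unfolding d_def by simp
    have "\<bar>integral\<^sup>L M (second_variation d v)\<bar> \<le> (\<integral>x. \<bar>second_variation d v x\<bar> \<partial>M)"
      by (rule integral_abs_bound)
    also have "\<dots> \<le> (\<integral>x. c * ((norm (d 0 x))\<^sup>2 + (\<Sum>k<N. (norm (ybar d k x))\<^sup>2 + (norm (v k x))\<^sup>2)) \<partial>M)"
      using Ld Ldb Lv
      by (intro integral_mono c)
        (auto simp: sqint_def intro!: integrable_second_variation Bochner_Integration.integrable_add integrable_sum)
    also have "\<dots> = c * (?I (d 0) + (\<Sum>k<N. ?I (ybar d k) + ?I (v k)))"
    proof -
      have ik: "integrable M (\<lambda>x. (norm (ybar d k x))\<^sup>2 + (norm (v k x))\<^sup>2)" if "k \<in> {..<N}" for k
        using Ldb Lv that by (simp add: sqint_def)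
      have "(\<integral>x. (norm (d 0 x))\<^sup>2 + (\<Sum>k<N. (norm (ybar d k x))\<^sup>2 + (norm (v k x))\<^sup>2) \<partial>M)
          = ?I (d 0) + (\<integral>x. (\<Sum>k<N. (norm (ybar d k x))\<^sup>2 + (norm (v k x))\<^sup>2) \<partial>M)"
        by (rule Bochner_Integration.integral_add)
          (use Ld[of 0] Bochner_Integration.integrable_sum[of "{..<N}", OF ik] in \<open>auto simp: sqint_def\<close>)
      also have "(\<integral>x. (\<Sum>k<N. (norm (ybar d k x))\<^sup>2 + (norm (v k x))\<^sup>2) \<partial>M)
          = (\<Sum>k<N. \<integral>x. (norm (ybar d k x))\<^sup>2 + (norm (v k x))\<^sup>2 \<partial>M)"
        by (rule Bochner_Integration.integral_sum) (rule ik)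
      also have "\<dots> = (\<Sum>k<N. ?I (ybar d k) + ?I (v k))"
        using Ldb Lv by (intro sum.cong) (auto simp: sqint_def)
      finally show ?thesis by simp
    qed
    also have "\<dots> \<le> c * (Kd * sqnorm v + (\<Sum>k<N. Kd * sqnorm v + ?I (v k)))"
      using Kd[OF v, of 0] db c0 unfolding d_def by (intro mult_left_mono add_mono sum_mono) auto
    also have "\<dots> = c * ((N + 1) * Kd + 1) * sqnorm v"
      by (simp add: sum.distrib sqnorm_def algebra_simps)
    finally show ?thesis unfolding d_def .
  qed
  moreover have "c * ((N + 1) * Kd + 1) \<ge> 0" using c0 Kd0 by simp
  ultimately show ?thesis by blast
qed

end

subsection \<open>The gradient\<close>

context lq_problem
begin

definition state_gradient :: "(nat \<Rightarrow> 'a \<Rightarrow> real^'n) \<Rightarrow> nat \<Rightarrow> 'a \<Rightarrow> real^'m" where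
  "state_gradient y = (\<lambda>k x. L0_adj (\<lambda>x. G0 *v y 0 x) k x
      + L1_adj (Phi_adj (\<lambda>k x. Q k *v ybar y k x)) k x + S k *v ybar y k x)"

definition state_pairing ::
    "(nat \<Rightarrow> 'a \<Rightarrow> real^'n) \<Rightarrow> (nat \<Rightarrow> 'a \<Rightarrow> real^'n) \<Rightarrow> (nat \<Rightarrow> 'a \<Rightarrow> real^'m) \<Rightarrow> real" where
  "state_pairing y d v = (\<integral>x. inner (G0 *v y 0 x) (d 0 x) \<partial>M)
     + (\<Sum>k<N. (\<integral>x. inner (Q k *v ybar y k x) (ybar d k x) \<partial>M)
        + (\<integral>x. inner (S k *v ybar y k x) (v k x) \<partial>M))"

lemma predL2_matrix_vector_ybar:
  assumes y: "\<And>k. k \<le> N \<Longrightarrow> L2 M (y k)"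
  shows "predL2 M w N (\<lambda>k x. (D k :: real^'n^'l) *v ybar y k x)"
  unfolding predL2_def
proof (intro allI impI)
  fix k assume k: "k < N"
  have "sqint M (F k) (ybar y k)" using cexp_L2_contraction(1)[of k "y (Suc k)"] y[of "Suc k"] k by simp
  then show "sqint M (F k) (\<lambda>x. D k *v ybar y k x)" by (rule sqint_filt_matrix_vector[rotated]) (use k in simp)
qed

lemma state_gradient:
  assumes N0: "0 < N" and y: "\<And>k. k \<le> N \<Longrightarrow> L2 M (y k)"
  shows "\<And>k. k < N \<Longrightarrow> L2 M (state_gradient y k)"
    and "predL2 M w N v \<Longrightarrow> ipp M N (state_gradient y) v = state_pairing y (response v) v"
proof -
  let ?X0 = "\<lambda>x. G0 *v y 0 x" and ?Qy = "\<lambda>k x. Q k *v ybar y k x" and ?Sy = "\<lambda>k x. S k *v ybar y k x"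
  have L0: "predL2 M w N (L0_adj ?X0)"
    "\<And>v. predL2 M w N v \<Longrightarrow> ipp M N (L0_adj ?X0) v = (\<integral>x. inner (?X0 x) (response v 0 x) \<partial>M)"
    using L0_adj[OF N0 L2_matrix_vector[OF y[OF le0]]] by (auto simp: ipx_def)
  have L1: "predL2 M w N (L1_adj (Phi_adj ?Qy))"
    "\<And>v. predL2 M w N v \<Longrightarrow> ipp M N (L1_adj (Phi_adj ?Qy)) v
       = (\<Sum>k<N. \<integral>x. inner (?Qy k x) (ybar (response v) k x) \<partial>M)"
    using L1_Phi_adj[OF predL2_matrix_vector_ybar[of y, OF y]] by auto
  have Sy: "k < N \<Longrightarrow> L2 M (?Sy k)" for k using predL2_L2[OF predL2_matrix_vector_ybar[of y, OF y]] .
  show L: "L2 M (state_gradient y k)" if "k < N" for k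
    unfolding state_gradient_def using predL2_L2[OF L0(1) that] predL2_L2[OF L1(1) that] Sy[OF that]
    by (intro L2_add)
  assume v: "predL2 M w N v"
  have "ipp M N (state_gradient y) v
      = ipp M N (\<lambda>k x. L0_adj ?X0 k x + L1_adj (Phi_adj ?Qy) k x) v + ipp M N ?Sy v"
    unfolding state_gradient_def
    by (rule ipp_add_left) (use predL2_L2[OF L0(1)] predL2_L2[OF L1(1)] Sy predL2_L2[OF v] in \<open>auto intro: L2_add\<close>)
  also have "\<dots> = ipp M N (L0_adj ?X0) v + ipp M N (L1_adj (Phi_adj ?Qy)) v + ipp M N ?Sy v"
    using ipp_add_left[of "L0_adj ?X0" "L1_adj (Phi_adj ?Qy)" v] predL2_L2[OF L0(1)] predL2_L2[OF L1(1)]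
      predL2_L2[OF v] by simp
  also have "ipp M N ?Sy v = (\<Sum>k<N. \<integral>x. inner (?Sy k x) (v k x) \<partial>M)"
    by (rule ipp_eq_sum) (use Sy predL2_L2[OF v] in auto)
  finally show "ipp M N (state_gradient y) v = state_pairing y (response v) v"
    unfolding state_pairing_def L0(2)[OF v] L1(2)[OF v] by (simp add: sum.distrib)
qed

lemma state_pairing_superposition:
  assumes y: "\<And>k. k \<le> N \<Longrightarrow> AE x in M. y k x = y1 k x + y2 k x + y3 k x"
    and L: "\<And>k. k \<le> N \<Longrightarrow> L2 M (y k)" "\<And>k. k \<le> N \<Longrightarrow> L2 M (y1 k)"
      "\<And>k. k \<le> N \<Longrightarrow> L2 M (y2 k)" "\<And>k. k \<le> N \<Longrightarrow> L2 M (y3 k)"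
    and d: "\<And>k. k \<le> N \<Longrightarrow> L2 M (d k)" and v: "\<And>k. k < N \<Longrightarrow> L2 M (v k)"
  shows "state_pairing y d v = state_pairing y1 d v + state_pairing y2 d v + state_pairing y3 d v"
proof -
  have y12: "AE x in M. (y1 k x + y2 k x) = y1 k x + y2 k x" for k by simp
  have Lb: "k < N \<Longrightarrow> L2 M (ybar z k)" if "\<And>k. k \<le> N \<Longrightarrow> L2 M (z k)" for k z
    using that by (simp add: L2_cexp Suc_le_eq)
  have "AE x in M. \<forall>k<N. ybar y k x = ybar (\<lambda>k x. y1 k x + y2 k x) k x + ybar y3 k x"
    by (rule ybar_AE_add) (use y L in \<open>auto intro: L2_add\<close>)
  moreover have "AE x in M. \<forall>k<N. ybar (\<lambda>k x. y1 k x + y2 k x) k x = ybar y1 k x + ybar y2 k x"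
    by (rule ybar_AE_add) (use L in \<open>auto intro: L2_add\<close>)
  ultimately have "AE x in M. \<forall>k<N. ybar y k x = ybar y1 k x + ybar y2 k x + ybar y3 k x"
    by eventually_elim simp
  then have yb: "AE x in M. ybar y k x = ybar y1 k x + ybar y2 k x + ybar y3 k x" if "k < N" for k
    using that by (auto elim!: AE_mp)
  have Q: "(\<integral>x. inner (Q k *v ybar y k x) (ybar d k x) \<partial>M)
      = (\<integral>x. inner (Q k *v ybar y1 k x) (ybar d k x) \<partial>M) + (\<integral>x. inner (Q k *v ybar y2 k x) (ybar d k x) \<partial>M)
        + (\<integral>x. inner (Q k *v ybar y3 k x) (ybar d k x) \<partial>M)" if "k < N" for k
    by (rule integral_inner_matrix_vector_AE_add3[OF yb[OF that]]) (use that L d Lb in blast)+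
  have S: "(\<integral>x. inner (S k *v ybar y k x) (v k x) \<partial>M)
      = (\<integral>x. inner (S k *v ybar y1 k x) (v k x) \<partial>M) + (\<integral>x. inner (S k *v ybar y2 k x) (v k x) \<partial>M)
        + (\<integral>x. inner (S k *v ybar y3 k x) (v k x) \<partial>M)" if "k < N" for k
    by (rule integral_inner_matrix_vector_AE_add3[OF yb[OF that]]) (use that L v Lb in blast)+
  have G: "(\<integral>x. inner (G0 *v y 0 x) (d 0 x) \<partial>M)
      = (\<integral>x. inner (G0 *v y1 0 x) (d 0 x) \<partial>M) + (\<integral>x. inner (G0 *v y2 0 x) (d 0 x) \<partial>M)
        + (\<integral>x. inner (G0 *v y3 0 x) (d 0 x) \<partial>M)"
    by (rule integral_inner_matrix_vector_AE_add3[OF y[OF le0] L(1-4)[OF le0] d[OF le0]])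
  show ?thesis
    unfolding state_pairing_def G using Q S by (simp add: sum.distrib)
qed

lemma integral_first_variation:
  assumes y: "\<And>k. k \<le> N \<Longrightarrow> L2 M (y k)" and u: "\<And>k. k < N \<Longrightarrow> L2 M (u k)"
    and d: "\<And>k. k \<le> N \<Longrightarrow> L2 M (d k)" and v: "\<And>k. k < N \<Longrightarrow> L2 M (v k)"
  shows "integral\<^sup>L M (first_variation y u d v) = state_pairing y d v
    + (\<Sum>k<N. (\<integral>x. inner (transpose (S k) *v u k x) (ybar d k x) \<partial>M) + (\<integral>x. inner (R k *v u k x) (v k x) \<partial>M)
        + (\<integral>x. inner (eta k x) (ybar d k x) \<partial>M) + (\<integral>x. inner (rho k x) (v k x) \<partial>M))"
proof -
  have yb: "k < N \<Longrightarrow> L2 M (ybar y k)" and db: "k < N \<Longrightarrow> L2 M (ybar d k)" for k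
    using y[of "Suc k"] d[of "Suc k"] by (auto simp: L2_cexp)
  note L = y d u v yb db predL2_L2[OF eta] predL2_L2[OF rho]
  let ?t = "\<lambda>k x. inner (Q k *v ybar y k x) (ybar d k x) + inner (S k *v ybar y k x) (v k x)
        + inner (transpose (S k) *v u k x) (ybar d k x) + inner (R k *v u k x) (v k x)
        + inner (eta k x) (ybar d k x) + inner (rho k x) (v k x)"
  have it: "integrable M (?t k)" if "k \<in> {..<N}" for k
    using that L by (auto intro!: Bochner_Integration.integrable_add L2_integrable_inner L2_matrix_vector)
  have "integral\<^sup>L M (first_variation y u d v)
      = (\<integral>x. inner (G0 *v y 0 x) (d 0 x) \<partial>M) + (\<integral>x. (\<Sum>k<N. ?t k x) \<partial>M)"
    unfolding first_variation_def
    by (rule Bochner_Integration.integral_add)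
      (use L it in \<open>auto intro!: L2_integrable_inner L2_matrix_vector Bochner_Integration.integrable_sum\<close>)
  also have "(\<integral>x. (\<Sum>k<N. ?t k x) \<partial>M) = (\<Sum>k<N. integral\<^sup>L M (?t k))"
    by (rule Bochner_Integration.integral_sum) (rule it)
  also have "\<dots> = (\<Sum>k<N. (\<integral>x. inner (Q k *v ybar y k x) (ybar d k x) \<partial>M)
        + (\<integral>x. inner (S k *v ybar y k x) (v k x) \<partial>M)
        + (\<integral>x. inner (transpose (S k) *v u k x) (ybar d k x) \<partial>M) + (\<integral>x. inner (R k *v u k x) (v k x) \<partial>M)
        + (\<integral>x. inner (eta k x) (ybar d k x) \<partial>M) + (\<integral>x. inner (rho k x) (v k x) \<partial>M))"
    using L by (intro sum.cong refl) (simp add: L2_integrable_inner L2_matrix_vector)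
  finally show ?thesis
    unfolding state_pairing_def by (simp add: sum.distrib algebra_simps)
qed

text \<open>\<open>gradient_control u\<close>, \<open>gradient_terminal xi\<close> and \<open>gradient_source\<close> are the operators
  \<open>\<A>u\<close>, \<open>\<B>\<xi>\<close> and \<open>a\<close> of the statement.\<close>
definition gradient_control :: "(nat \<Rightarrow> 'a \<Rightarrow> real^'m) \<Rightarrow> nat \<Rightarrow> 'a \<Rightarrow> real^'m" where
  "gradient_control u = (\<lambda>k x. L0_adj (\<lambda>x. G0 *v response u 0 x) k x
      + L1_adj (Phi_adj (\<lambda>k x. Q k *v ybar (response u) k x)) k x
      + L1_adj (Phi_adj (\<lambda>k x. transpose (S k) *v u k x)) k x
      + S k *v ybar (response u) k x + R k *v u k x)"

definition gradient_terminal :: "('a \<Rightarrow> real^'n) \<Rightarrow> nat \<Rightarrow> 'a \<Rightarrow> real^'m" where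
  "gradient_terminal xi = state_gradient (sol M w N A B C (\<lambda>k x. 0) xi (\<lambda>k x. 0))"

definition gradient_source :: "nat \<Rightarrow> 'a \<Rightarrow> real^'m" where
  "gradient_source = (\<lambda>k x. L0_adj (\<lambda>x. G0 *v sol M w N A B C q (\<lambda>x. 0) (\<lambda>k x. 0) 0 x) k x
      + L1_adj (Phi_adj (\<lambda>k x. Q k *v ybar (sol M w N A B C q (\<lambda>x. 0) (\<lambda>k x. 0)) k x)) k x
      + L1_adj (Phi_adj eta) k x + S k *v ybar (sol M w N A B C q (\<lambda>x. 0) (\<lambda>k x. 0)) k x + rho k x)"

lemma gradient_split:
  "gradient_control u k x + gradient_terminal xi k x + gradient_source k x
    = state_gradient (response u) k x + state_gradient (sol M w N A B C (\<lambda>k x. 0) xi (\<lambda>k x. 0)) k x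
      + state_gradient (sol M w N A B C q (\<lambda>x. 0) (\<lambda>k x. 0)) k x
      + (L1_adj (Phi_adj (\<lambda>k x. transpose (S k) *v u k x)) k x + R k *v u k x)
      + (L1_adj (Phi_adj eta) k x + rho k x)"
  unfolding gradient_control_def gradient_terminal_def gradient_source_def state_gradient_def
  by (simp add: algebra_simps)

lemma sol_decomposition:
  assumes xi: "sqint M (F N) xi" and u: "predL2 M w N u" and k: "k \<le> N"
  shows "AE x in M. sol M w N A B C q xi u k x = sol M w N A B C (\<lambda>k x. 0) xi (\<lambda>k x. 0) k x
    + response u k x + sol M w N A B C q (\<lambda>x. 0) (\<lambda>k x. 0) k x"
proof -
  have z: "predL2 M w N (\<lambda>k x. 0::real^'n)" by (rule predL2_zero)
  note S = is_sol_sol[OF predL2_zero z xi] is_sol_response[OF u] is_sol_sol[OF u z xi]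
    is_sol_sol[OF predL2_zero q sqint_zero] is_sol_sol[OF u q xi]
  have "AE x in M. sol M w N A B C (\<lambda>k x. 0) xi u k x
      = sol M w N A B C (\<lambda>k x. 0) xi (\<lambda>k x. 0) k x + response u k x"
    by (rule is_sol_superposition[OF S(1,2,3)]) (use k in auto)
  moreover have "AE x in M. sol M w N A B C q xi u k x
      = sol M w N A B C (\<lambda>k x. 0) xi u k x + sol M w N A B C q (\<lambda>x. 0) (\<lambda>k x. 0) k x"
    by (rule is_sol_superposition[OF S(3,4,5)]) (use k in auto)
  ultimately show ?thesis by eventually_elim simp
qed

lemma ipp_L1_Phi_adj_plus:
  assumes X: "predL2 M w N X" and Z: "predL2 M w N Z" and v: "predL2 M w N v"
  shows "ipp M N (\<lambda>k x. L1_adj (Phi_adj X) k x + Z k x) v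
    = (\<Sum>k<N. (\<integral>x. inner (X k x) (ybar (response v) k x) \<partial>M) + (\<integral>x. inner (Z k x) (v k x) \<partial>M))"
proof -
  have "predL2 M w N (L1_adj (Phi_adj X))" and
    "ipp M N (L1_adj (Phi_adj X)) v = (\<Sum>k<N. \<integral>x. inner (X k x) (ybar (response v) k x) \<partial>M)"
    using L1_Phi_adj[OF X] v by auto
  then show ?thesis
    using ipp_add_left[of "L1_adj (Phi_adj X)" Z v] ipp_eq_sum[of Z v] predL2_L2[OF Z] predL2_L2[OF v]
      predL2_L2[of "L1_adj (Phi_adj X)"]
    by (simp add: sum.distrib)
qed

lemma gradient:
  assumes N0: "0 < N" and xi: "sqint M (F N) xi" and u: "predL2 M w N u"
  defines "g \<equiv> \<lambda>k x. gradient_control u k x + gradient_terminal xi k x + gradient_source k x"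
  shows "\<And>k. k < N \<Longrightarrow> L2 M (g k)"
    and "predL2 M w N v \<Longrightarrow> ipp M N g v = integral\<^sup>L M (first_variation (sol M w N A B C q xi u) u (response v) v)"
proof -
  let ?I = "sol M w N A B C (\<lambda>k x. 0) xi (\<lambda>k x. 0)" and ?Q = "sol M w N A B C q (\<lambda>x. 0) (\<lambda>k x. 0)"
  let ?y = "sol M w N A B C q xi u"
  let ?c = "\<lambda>k x. L1_adj (Phi_adj (\<lambda>k x. transpose (S k) *v u k x)) k x + R k *v u k x"
  let ?s = "\<lambda>k x. L1_adj (Phi_adj eta) k x + rho k x"
  have Ly: "k \<le> N \<Longrightarrow> L2 M (?y k)" "k \<le> N \<Longrightarrow> L2 M (?I k)" "k \<le> N \<Longrightarrow> L2 M (response u k)"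
    "k \<le> N \<Longrightarrow> L2 M (?Q k)" for k
    using is_sol_L2[OF is_sol_sol[OF u q xi]] is_sol_L2[OF is_sol_sol[OF predL2_zero predL2_zero xi]]
      is_sol_L2[OF is_sol_response[OF u]] is_sol_L2[OF is_sol_sol[OF predL2_zero q sqint_zero]] by auto
  have SU: "predL2 M w N (\<lambda>k x. transpose (S k) *v u k x)"
    using u by (auto simp: predL2_def intro: sqint_filt_matrix_vector)
  have RU: "predL2 M w N (\<lambda>k x. R k *v u k x)"
    using u by (auto simp: predL2_def intro: sqint_filt_matrix_vector)
  have Lcs: "L2 M (L1_adj (Phi_adj (\<lambda>k x. transpose (S k) *v u k x)) k)" "L2 M (\<lambda>x. R k *v u k x)"
    "L2 M (L1_adj (Phi_adj eta) k)" "L2 M (rho k)" if "k < N" for k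
    using predL2_L2[OF conjunct1[OF L1_Phi_adj[OF SU]]] predL2_L2[OF RU]
      predL2_L2[OF conjunct1[OF L1_Phi_adj[OF eta]]] predL2_L2[OF rho] that by auto
  note LG = state_gradient(1)[OF N0, of ?I] state_gradient(1)[OF N0, of "response u"]
    state_gradient(1)[OF N0, of ?Q]
  have g: "g = (\<lambda>k x. state_gradient (response u) k x + state_gradient ?I k x + state_gradient ?Q k x
      + ?c k x + ?s k x)"
    unfolding g_def gradient_split ..
  show L: "L2 M (g k)" if "k < N" for k
    unfolding g using LG Ly Lcs that by (auto intro!: L2_add)
  assume v: "predL2 M w N v"
  have Lv: "k < N \<Longrightarrow> L2 M (v k)" for k using predL2_L2[OF v] .
  have Ld: "k \<le> N \<Longrightarrow> L2 M (response v k)" for k using is_sol_L2[OF is_sol_response[OF v]] .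
  have "ipp M N g v = ipp M N (state_gradient (response u)) v + ipp M N (state_gradient ?I) v
      + ipp M N (state_gradient ?Q) v + ipp M N ?c v + ipp M N ?s v"
    unfolding g using LG Ly Lcs Lv by (simp add: ipp_add_left L2_add)
  also have "\<dots> = state_pairing (response u) (response v) v + state_pairing ?I (response v) v
      + state_pairing ?Q (response v) v + ipp M N ?c v + ipp M N ?s v"
    using state_gradient(2)[OF N0, of _ v] Ly v by simp
  also have "state_pairing (response u) (response v) v + state_pairing ?I (response v) v
      + state_pairing ?Q (response v) v = state_pairing ?y (response v) v"
    using state_pairing_superposition[of ?y ?I "response u" ?Q "response v" v]
      sol_decomposition[OF xi u] Ly Ld Lv by (simp add: algebra_simps)
  moreover note integral_first_variation[of ?y u "response v" v, OF Ly(1) predL2_L2[OF u] Ld Lv]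
  ultimately show "ipp M N g v = integral\<^sup>L M (first_variation ?y u (response v) v)"
    using ipp_L1_Phi_adj_plus[OF SU RU v] ipp_L1_Phi_adj_plus[OF eta rho v]
    by (simp add: sum.distrib algebra_simps)
qed

end

theorem lemma3p3:
  fixes M :: "'a measure" and w :: "nat \<Rightarrow> 'a \<Rightarrow> real" and N :: nat
    and A C :: "nat \<Rightarrow> real^'n^'n" and B :: "nat \<Rightarrow> real^'m^'n"
    and q eta :: "nat \<Rightarrow> 'a \<Rightarrow> real^'n" and rho :: "nat \<Rightarrow> 'a \<Rightarrow> real^'m"
    and G0 :: "real^'n^'n" and Q :: "nat \<Rightarrow> real^'n^'n" and S :: "nat \<Rightarrow> real^'n^'m"
    and R :: "nat \<Rightarrow> real^'m^'m"
    and xi :: "'a \<Rightarrow> real^'n" and u :: "nat \<Rightarrow> 'a \<Rightarrow> real^'m"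
  assumes "prob_space M" and "complete_measure M" and "N \<ge> 1"
    and "\<forall>k<N. w k \<in> borel_measurable M \<and> integrable M (\<lambda>x. (w k x)\<^sup>2)"
    and "\<forall>k<N. AE x in M. real_cond_exp M (filt M w k) (w k) x = 0"
    and "\<forall>k<N. AE x in M. real_cond_exp M (filt M w k) (\<lambda>y. (w k y)\<^sup>2) x = 1"
    and "predL2 M w N q"
    and "transpose G0 = G0" and "\<forall>k<N. transpose (Q k) = Q k" and "\<forall>k<N. transpose (R k) = R k"
    and "predL2 M w N eta" and "predL2 M w N rho"
    and "sqint M (filt M w N) xi"
    and "predL2 M w N u"
  shows
   "let U = {h :: nat \<Rightarrow> 'a \<Rightarrow> real^'m. predL2 M w N h};
        Y = {h :: nat \<Rightarrow> 'a \<Rightarrow> real^'n. adaptL2 M w N h};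
        z0 = (\<lambda>k x. 0 :: real^'n);
        I0 = (\<lambda>\<zeta>. sol M w N A B C z0 \<zeta> (\<lambda>k x. 0) 0);
        I1 = (\<lambda>\<zeta> k. sol M w N A B C z0 \<zeta> (\<lambda>k x. 0) (Suc k));
        L0 = (\<lambda>v. sol M w N A B C z0 (\<lambda>x. 0) v 0);
        L1 = (\<lambda>v k. sol M w N A B C z0 (\<lambda>x. 0) v (Suc k));
        Q0 = sol M w N A B C q (\<lambda>x. 0) (\<lambda>k x. 0) 0;
        Q1 = (\<lambda>k. sol M w N A B C q (\<lambda>x. 0) (\<lambda>k x. 0) (Suc k));
        Phi = (\<lambda>\<phi> k. cexp M (filt M w k) (\<phi> k));
        G0op = (\<lambda>X x. G0 *v X x);
        Qop = (\<lambda>\<phi> k x. Q k *v \<phi> k x);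
        Sop = (\<lambda>\<phi> k x. S k *v \<phi> k x);
        StOp = (\<lambda>v k x. transpose (S k) *v v k x);
        Rop = (\<lambda>v k x. R k *v v k x);
        L0s = hadj U (ipp M N) (ipx M) L0;
        L1s = hadj U (ipp M N) (ipp M N) L1;
        Phis = hadj Y (ipp M N) (ipp M N) Phi;
        Au = (\<lambda>k x. L0s (G0op (L0 u)) k x + L1s (Phis (Qop (Phi (L1 u)))) k x
                    + L1s (Phis (StOp u)) k x + Sop (Phi (L1 u)) k x + Rop u k x);
        Bxi = (\<lambda>k x. L0s (G0op (I0 xi)) k x + L1s (Phis (Qop (Phi (I1 xi)))) k x
                    + Sop (Phi (I1 xi)) k x);
        a = (\<lambda>k x. L0s (G0op Q0) k x + L1s (Phis (Qop (Phi Q1))) k x + L1s (Phis eta) k x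
                  + Sop (Phi Q1) k x + rho k x)
    in frechet_at U (\<lambda>v. sqrt (ipp M N v v))
         (\<lambda>v. cost M w N A B C q G0 Q S R eta rho xi v) u
         (\<lambda>v. ipp M N (\<lambda>k x. Au k x + Bxi k x + a k x) v)"
proof -
  interpret lq_problem M w N A C B q eta rho G0 Q S R
  proof (intro lq_problem.intro state_equation.intro noise_filtration.intro lq_problem_axioms.intro)
  qed (use assms in auto)
  have N0: "0 < N" using \<open>N \<ge> 1\<close> by simp
  obtain K where K0: "K \<ge> 0" and K: "\<And>v. predL2 M w N v \<Longrightarrow>
      \<bar>integral\<^sup>L M (second_variation (response v) v)\<bar> \<le> K * sqnorm v"
    using second_variation_bound by blast
  note g = gradient[OF N0 \<open>sqint M (filt M w N) xi\<close> \<open>predL2 M w N u\<close>]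
  have "frechet_at controls (\<lambda>v. sqrt (ipp M N v v)) (cost M w N A B C q G0 Q S R eta rho xi) u
      (\<lambda>v. ipp M N (\<lambda>k x. gradient_control u k x + gradient_terminal xi k x + gradient_source k x) v)"
  proof (rule frechet_at_of_quadratic_remainder)
    show "0 \<le> K / 2" using K0 by simp
    fix v :: "nat \<Rightarrow> 'a \<Rightarrow> real^'m" assume v: "predL2 M w N v"
    show "\<bar>cost M w N A B C q G0 Q S R eta rho xi (\<lambda>k x. u k x + v k x)
        - cost M w N A B C q G0 Q S R eta rho xi u
        - ipp M N (\<lambda>k x. gradient_control u k x + gradient_terminal xi k x + gradient_source k x) v\<bar>
      \<le> K / 2 * ipp M N v v"
      using cost_increment[OF \<open>sqint M (filt M w N) xi\<close> \<open>predL2 M w N u\<close> v] g(2)[OF v] K[OF v]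
        ipp_self_eq_sqnorm[OF v] by simp
  qed (rule g(1))
  then show ?thesis
    unfolding Let_def gradient_control_def gradient_terminal_def gradient_source_def state_gradient_def .
qed

end
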